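(* Let $K$ be a field, $Q$ the bipartite type $A$ quiver with vertices $y_0,x_1,\dots,x_n,y_n$ and arrows $\alpha_i\colon x_i\to y_{i-1}$, $\beta_i\colon x_i\to y_i$, $\mathbf{d}$ a dimension vector, $\mathbf{r}$ a quiver rank array, and $\mathbf{b}(\mathbf{r})$ its block rank matrix. Then there exists a unique $d\times d$ permutation matrix $v(\mathbf{r})$ such that (1) for all $1\le i,j\le 2n+1$ the number of $1$s in block $(i,j)$ of $v(\mathbf{r})$ equals $\mathbf{b}(\mathbf{r})_{i,j}+\mathbf{b}(\mathbf{r})_{i-1,j-1}-\mathbf{b}(\mathbf{r})_{i,j-1}-\mathbf{b}(\mathbf{r})_{i-1,j}$, where $\mathbf{b}(\mathbf{r})_{i,j}=0$ if $i$ or $j$ lies outside $[1,2n+1]$; (2) the $1$s are arranged from northwest to southeast across each block row; (3) the $1$s are arranged from northwest to southeast down each block column.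
   Context: $\mathrm{rep}_Q(\mathbf{d})$: tuples $V=(V_a)$, $V_a\in\mathrm{Mat}_{\mathbf{d}(ha)\times\mathbf{d}(ta)}(K)$. $M_Q(V)$: block matrix with block rows $y_0,\dots,y_n$ and block columns $x_n,\dots,x_1$, with $V_{\alpha_i}$ in block $(y_{i-1},x_i)$, $V_{\beta_i}$ in block $(y_i,x_i)$, zeros elsewhere; for an interval $J$ (nonempty set of consecutive vertices), $M_J(V)$ is its submatrix on block rows of $y$-vertices of $J$ and block columns of $x$-vertices of $J$. A quiver rank array $\mathbf{r}$ is a function on intervals of the form $J\mapsto\operatorname{rank}M_J(V)$ for some $V$; $\mathcal{O}_\mathbf{r}$ the set of such $V$. $d_x=\sum\mathbf{d}(x_i)$, $d_y=\sum\mathbf{d}(y_i)$, $d=d_x+d_y$, $\zeta(V)=\begin{pmatrix}M_Q(V)&\mathbf{1}_{d_y}\\ \mathbf{1}_{d_x}&0\end{pmatrix}$. $d\times d$ matrices are divided into row blocks of sizes $\mathbf{d}(y_0),\dots,\mathbf{d}(y_n),\mathbf{d}(x_n),\dots,\mathbf{d}(x_1)$ and column blocks of sizes $\mathbf{d}(x_n),\dots,\mathbf{d}(x_1),\mathbf{d}(y_0),\dots,\mathbf{d}(y_n)$, numbered $1..2n+1$; $Z_{i\times j}$ is the submatrix of block rows $1..i$ and block columns $1..j$; $\mathbf{b}(\mathbf{r})_{i,j}=\operatorname{rank}\zeta(V)_{i\times j}$ for $V\in\mathcal{O}_\mathbf{r}$. "Northwest to southeast across a block row" means: of any two $1$s in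 the same block row, the one in the higher row lies in the column further left (similarly for block columns). *)

theory Defs
  imports "Jordan_Normal_Form.DL_Rank" "Jordan_Normal_Form.DL_Submatrix"
begin

definition mrank :: "'a::field mat \<Rightarrow> nat" where
  "mrank A = vec_space.rank (dim_row A) A"

(* A dimension vector is given by dy (i = 0..n)
   and dx (i = 1..n). *)

definition rep_Q :: "nat \<Rightarrow> (nat \<Rightarrow> nat) \<Rightarrow> (nat \<Rightarrow> nat) \<Rightarrow>
    ((nat \<Rightarrow> 'a::field mat) \<times> (nat \<Rightarrow> 'a mat)) set" where
  "rep_Q n dx dy = {(al, be). \<forall>i\<in>{1..n}.
      al i \<in> carrier_mat (dy (i - 1)) (dx i) \<and> be i \<in> carrier_mat (dy i) (dx i)}"

definition dX :: "nat \<Rightarrow> (nat \<Rightarrow> nat) \<Rightarrow> nat" where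
  "dX n dx = (\<Sum>i\<in>{1..n}. dx i)"
definition dY :: "nat \<Rightarrow> (nat \<Rightarrow> nat) \<Rightarrow> nat" where
  "dY n dy = (\<Sum>i\<in>{0..n}. dy i)"

(* Offset of block row y_i in M_Q (block rows ordered y_0,...,y_n) *)
definition yoff :: "(nat \<Rightarrow> nat) \<Rightarrow> nat \<Rightarrow> nat" where
  "yoff dy i = (\<Sum>k<i. dy k)"
(* Offset of block column x_i in M_Q (block columns ordered x_n,...,x_1) *)
definition xoff :: "nat \<Rightarrow> (nat \<Rightarrow> nat) \<Rightarrow> nat \<Rightarrow> nat" where
  "xoff n dx i = (\<Sum>k\<in>{i+1..n}. dx k)"

definition yrows :: "(nat \<Rightarrow> nat) \<Rightarrow> nat \<Rightarrow> nat set" where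
  "yrows dy i = {yoff dy i ..< yoff dy i + dy i}"
definition xcols :: "nat \<Rightarrow> (nat \<Rightarrow> nat) \<Rightarrow> nat \<Rightarrow> nat set" where
  "xcols n dx i = {xoff n dx i ..< xoff n dx i + dx i}"

definition M_Q :: "nat \<Rightarrow> (nat \<Rightarrow> nat) \<Rightarrow> (nat \<Rightarrow> nat) \<Rightarrow>
    (nat \<Rightarrow> 'a::field mat) \<times> (nat \<Rightarrow> 'a mat) \<Rightarrow> 'a mat" where
  "M_Q n dx dy V = mat (dY n dy) (dX n dx) (\<lambda>(p, q).
     \<Sum>i\<in>{1..n}.
       (if q \<in> xcols n dx i \<and> p \<in> yrows dy (i - 1)
        then fst V i $$ (p - yoff dy (i - 1), q - xoff n dx i) else 0)
     + (if q \<in> xcols n dx i \<and> p \<in> yrows dy i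
        then snd V i $$ (p - yoff dy i, q - xoff n dx i) else 0))"

(* Vertices are numbered by their position 0..2n in the order
   y_0, x_1, y_1, ..., x_n, y_n: y_i has position 2i, x_i has position 2i-1.
   An interval J is {a..b} with a \<le> b \<le> 2n, encoded as the pair (a,b). *)
definition M_J :: "nat \<Rightarrow> (nat \<Rightarrow> nat) \<Rightarrow> (nat \<Rightarrow> nat) \<Rightarrow>
    (nat \<Rightarrow> 'a::field mat) \<times> (nat \<Rightarrow> 'a mat) \<Rightarrow> nat \<times> nat \<Rightarrow> 'a mat" where
  "M_J n dx dy V J = submatrix (M_Q n dx dy V)
     (\<Union>i\<in>{i. i \<le> n \<and> 2 * i \<in> {fst J..snd J}}. yrows dy i)
     (\<Union>i\<in>{i. 1 \<le> i \<and> i \<le> n \<and> 2 * i - 1 \<in> {fst J..snd J}}. xcols n dx i)"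

definition is_interval :: "nat \<Rightarrow> nat \<times> nat \<Rightarrow> bool" where
  "is_interval n J \<longleftrightarrow> fst J \<le> snd J \<and> snd J \<le> 2 * n"

definition orbit_r :: "nat \<Rightarrow> (nat \<Rightarrow> nat) \<Rightarrow> (nat \<Rightarrow> nat) \<Rightarrow> (nat \<times> nat \<Rightarrow> nat) \<Rightarrow>
    ((nat \<Rightarrow> 'a::field mat) \<times> (nat \<Rightarrow> 'a mat)) set" where
  "orbit_r n dx dy r = {V \<in> rep_Q n dx dy.
      \<forall>J. is_interval n J \<longrightarrow> r J = mrank (M_J n dx dy V J)}"

definition quiver_rank_array :: "'a::field itself \<Rightarrow> nat \<Rightarrow> (nat \<Rightarrow> nat) \<Rightarrow> (nat \<Rightarrow> nat) \<Rightarrow>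
    (nat \<times> nat \<Rightarrow> nat) \<Rightarrow> bool" where
  "quiver_rank_array TYPE('a) n dx dy r \<longleftrightarrow> (orbit_r n dx dy r :: (_ \<times> (nat \<Rightarrow> 'a mat)) set) \<noteq> {}"

definition zeta :: "nat \<Rightarrow> (nat \<Rightarrow> nat) \<Rightarrow> (nat \<Rightarrow> nat) \<Rightarrow>
    (nat \<Rightarrow> 'a::field mat) \<times> (nat \<Rightarrow> 'a mat) \<Rightarrow> 'a mat" where
  "zeta n dx dy V = four_block_mat (M_Q n dx dy V) (1\<^sub>m (dY n dy))
                                   (1\<^sub>m (dX n dx)) (0\<^sub>m (dX n dx) (dY n dy))"

(* Block structure of d x d matrices, blocks numbered 1..2n+1.
   Row blocks: dy 0, ..., dy n, dx n, ..., dx 1.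
   Column blocks: dx n, ..., dx 1, dy 0, ..., dy n. *)
definition rsz :: "nat \<Rightarrow> (nat \<Rightarrow> nat) \<Rightarrow> (nat \<Rightarrow> nat) \<Rightarrow> nat \<Rightarrow> nat" where
  "rsz n dx dy k = (if k \<le> n + 1 then dy (k - 1) else dx (2 * n + 2 - k))"
definition csz :: "nat \<Rightarrow> (nat \<Rightarrow> nat) \<Rightarrow> (nat \<Rightarrow> nat) \<Rightarrow> nat \<Rightarrow> nat" where
  "csz n dx dy k = (if k \<le> n then dx (n + 1 - k) else dy (k - n - 1))"
(* 0-based start index of block k *)
definition roff :: "nat \<Rightarrow> (nat \<Rightarrow> nat) \<Rightarrow> (nat \<Rightarrow> nat) \<Rightarrow> nat \<Rightarrow> nat" where
  "roff n dx dy k = (\<Sum>m\<in>{1..<k}. rsz n dx dy m)"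
definition coff :: "nat \<Rightarrow> (nat \<Rightarrow> nat) \<Rightarrow> (nat \<Rightarrow> nat) \<Rightarrow> nat \<Rightarrow> nat" where
  "coff n dx dy k = (\<Sum>m\<in>{1..<k}. csz n dx dy m)"
definition rblock :: "nat \<Rightarrow> (nat \<Rightarrow> nat) \<Rightarrow> (nat \<Rightarrow> nat) \<Rightarrow> nat \<Rightarrow> nat set" where
  "rblock n dx dy k = {roff n dx dy k ..< roff n dx dy k + rsz n dx dy k}"
definition cblock :: "nat \<Rightarrow> (nat \<Rightarrow> nat) \<Rightarrow> (nat \<Rightarrow> nat) \<Rightarrow> nat \<Rightarrow> nat set" where
  "cblock n dx dy k = {coff n dx dy k ..< coff n dx dy k + csz n dx dy k}"

definition Zsub :: "nat \<Rightarrow> (nat \<Rightarrow> nat) \<Rightarrow> (nat \<Rightarrow> nat) \<Rightarrow> 'a mat \<Rightarrow> nat \<Rightarrow> nat \<Rightarrow> 'a mat" where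
  "Zsub n dx dy Z i j = submatrix Z {..< roff n dx dy (i + 1)} {..< coff n dx dy (j + 1)}"

(* block rank matrix b(r); b(r)_{i,j} = 0 outside [1,2n+1].  It is defined via
   an (arbitrary) representative V of O_r, as in the paper. *)
definition brank :: "'a::field itself \<Rightarrow> nat \<Rightarrow> (nat \<Rightarrow> nat) \<Rightarrow> (nat \<Rightarrow> nat) \<Rightarrow>
    (nat \<times> nat \<Rightarrow> nat) \<Rightarrow> nat \<Rightarrow> nat \<Rightarrow> nat" where
  "brank TYPE('a) n dx dy r i j =
     (if 1 \<le> i \<and> i \<le> 2 * n + 1 \<and> 1 \<le> j \<and> j \<le> 2 * n + 1
      then mrank (Zsub n dx dy
              (zeta n dx dy (SOME V. V \<in> (orbit_r n dx dy r :: (_ \<times> (nat \<Rightarrow> 'a mat)) set))) i j)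
      else 0)"

definition perm_mat :: "nat \<Rightarrow> 'a::field mat \<Rightarrow> bool" where
  "perm_mat d P \<longleftrightarrow> P \<in> carrier_mat d d \<and>
     (\<exists>\<sigma>. \<sigma> permutes {..<d} \<and> (\<forall>p<d. \<forall>q<d. P $$ (p, q) = (if \<sigma> p = q then 1 else 0)))"

definition ones_in_block :: "nat \<Rightarrow> (nat \<Rightarrow> nat) \<Rightarrow> (nat \<Rightarrow> nat) \<Rightarrow> 'a::field mat \<Rightarrow> nat \<Rightarrow> nat \<Rightarrow> nat" where
  "ones_in_block n dx dy P i j =
     card {(p, q). p \<in> rblock n dx dy i \<and> q \<in> cblock n dx dy j \<and> P $$ (p, q) = 1}"

definition nw_se_rows :: "nat \<Rightarrow> (nat \<Rightarrow> nat) \<Rightarrow> (nat \<Rightarrow> nat) \<Rightarrow> 'a::field mat \<Rightarrow> bool" where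
  "nw_se_rows n dx dy P \<longleftrightarrow> (\<forall>k\<in>{1..2*n+1}. \<forall>p1 q1 p2 q2.
      p1 \<in> rblock n dx dy k \<and> p2 \<in> rblock n dx dy k \<and> q1 < dim_col P \<and> q2 < dim_col P \<and>
      P $$ (p1, q1) = 1 \<and> P $$ (p2, q2) = 1 \<and> p1 < p2 \<longrightarrow> q1 < q2)"

definition nw_se_cols :: "nat \<Rightarrow> (nat \<Rightarrow> nat) \<Rightarrow> (nat \<Rightarrow> nat) \<Rightarrow> 'a::field mat \<Rightarrow> bool" where
  "nw_se_cols n dx dy P \<longleftrightarrow> (\<forall>k\<in>{1..2*n+1}. \<forall>p1 q1 p2 q2.
      q1 \<in> cblock n dx dy k \<and> q2 \<in> cblock n dx dy k \<and> p1 < dim_row P \<and> p2 < dim_row P \<and>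
      P $$ (p1, q1) = 1 \<and> P $$ (p2, q2) = 1 \<and> q1 < q2 \<longrightarrow> p1 < p2)"

end

theory Submission
  imports Defs
begin

text \<open>Every matrix \<open>\<zeta>(V)\<close> is invertible. For an invertible \<open>d \<times> d\<close> matrix the rank of
  the northwest \<open>a \<times> b\<close> corner counts the points \<open>(p, \<sigma> p)\<close> of a permutation \<open>\<sigma>\<close> with
  \<open>p < a\<close> and \<open>\<sigma> p < b\<close>: column \<open>b\<close> raises the rank exactly from the row at which it
  leaves the span of the earlier columns, and distinct columns do so at distinct rows. Hence the
  numbers of ones of \<open>\<sigma>\<close> in the blocks are the second differences of \<open>b(r)\<close>.
  Among the permutations with prescribed block counts exactly one is northwest to southeast in
  every block row and block column: for such a permutation the offset of a point inside its row
  block determines its column block, and the points of that column block lying in earlier row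
  blocks determine its column; conversely this formula defines a permutation of that kind.\<close>

section \<open>Permutations with prescribed block counts\<close>

definition block :: "(nat \<Rightarrow> nat) \<Rightarrow> nat \<Rightarrow> nat set" where
  "block R k = {R k ..< R (Suc k)}"

lemma card_less_eq_sum_blocks:
  assumes "mono R" "R 1 = 0" "finite A" "1 \<le> J"
  shows "card {x\<in>A. g x < R J} = (\<Sum>j\<in>{1..<J}. card {x\<in>A. g x \<in> block R j})"
  using assms(4)
proof (induction J)
  case 0
  then show ?case by simp
next
  case (Suc J)
  show ?case
  proof (cases "J = 0")
    case True
    then show ?thesis using assms(2) by simp
  next
    case False
    have "R J \<le> R (Suc J)" using assms(1) by (simp add: monoD)
    then have split: "{x\<in>A. g x < R (Suc J)} = {x\<in>A. g x < R J} \<union> {x\<in>A. g x \<in> block R J}"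
      by (auto simp: block_def)
    have "card {x\<in>A. g x < R (Suc J)} = card {x\<in>A. g x < R J} + card {x\<in>A. g x \<in> block R J}"
      unfolding split by (rule card_Un_disjoint) (use assms(3) in \<open>auto simp: block_def\<close>)
    then show ?thesis using Suc False by simp
  qed
qed

lemma block_unique:
  assumes "mono R" "p \<in> block R k1" "p \<in> block R k2"
  shows "k1 = k2"
proof (rule ccontr)
  assume "k1 \<noteq> k2"
  then consider "Suc k1 \<le> k2" | "Suc k2 \<le> k1" by linarith
  then show False
    by cases (use assms monoD[OF assms(1)] in \<open>fastforce simp: block_def\<close>)+
qed

lemma block_exists:
  assumes "mono R" "R 1 \<le> p" "p < R (Suc m)"
  shows "\<exists>k\<in>{1..m}. p \<in> block R k"
  using assms(3)
proof (induction m)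
  case 0
  then show ?case using assms(2) by simp
next
  case (Suc m)
  show ?case
  proof (cases "p < R (Suc m)")
    case True
    then show ?thesis using Suc.IH by force
  next
    case False
    then have "p \<in> block R (Suc m)" using Suc.prems by (simp add: block_def)
    then show ?thesis by force
  qed
qed

text \<open>A function \<open>\<sigma>\<close> stands for the permutation matrix with ones at \<open>(p, \<sigma> p)\<close>.\<close>
locale block_partition =
  fixes d m :: nat and R C :: "nat \<Rightarrow> nat"
  assumes mono_R: "mono R" and mono_C: "mono C" and R_1: "R 1 = 0" and C_1: "C 1 = 0"
    and R_last: "R (Suc m) = d" and C_last: "C (Suc m) = d"
begin

definition perm_nw_se_rows :: "(nat \<Rightarrow> nat) \<Rightarrow> bool" where
  "perm_nw_se_rows \<sigma> \<longleftrightarrow> (\<forall>k\<in>{1..m}. \<forall>p1 p2.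
     p1 \<in> block R k \<longrightarrow> p2 \<in> block R k \<longrightarrow> p1 < p2 \<longrightarrow> \<sigma> p1 < \<sigma> p2)"

definition perm_nw_se_cols :: "(nat \<Rightarrow> nat) \<Rightarrow> bool" where
  "perm_nw_se_cols \<sigma> \<longleftrightarrow> (\<forall>k\<in>{1..m}. \<forall>p1 p2. p1 < d \<longrightarrow> p2 < d \<longrightarrow>
     \<sigma> p1 \<in> block C k \<longrightarrow> \<sigma> p2 \<in> block C k \<longrightarrow> \<sigma> p1 < \<sigma> p2 \<longrightarrow> p1 < p2)"

definition block_count :: "(nat \<Rightarrow> nat) \<Rightarrow> nat \<Rightarrow> nat \<Rightarrow> nat" where
  "block_count \<sigma> i j = card {p\<in>block R i. \<sigma> p \<in> block C j}"

lemma R_le_d: "k \<le> Suc m \<Longrightarrow> R k \<le> d"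
  using mono_R R_last by (metis monoD)

lemma C_le_d: "k \<le> Suc m \<Longrightarrow> C k \<le> d"
  using mono_C C_last by (metis monoD)

lemma row_block_less_d: "i \<in> {1..m} \<Longrightarrow> p \<in> block R i \<Longrightarrow> p < d"
  using R_le_d[of "Suc i"] by (auto simp: block_def)

lemma col_block_less_d: "j \<in> {1..m} \<Longrightarrow> q \<in> block C j \<Longrightarrow> q < d"
  using C_le_d[of "Suc j"] by (auto simp: block_def)

lemma row_block_exists: "p < d \<Longrightarrow> \<exists>i\<in>{1..m}. p \<in> block R i"
  using block_exists[OF mono_R, of p m] R_1 R_last by simp

lemma col_block_exists: "q < d \<Longrightarrow> \<exists>j\<in>{1..m}. q \<in> block C j"
  using block_exists[OF mono_C, of q m] C_1 C_last by simp

lemma card_row_block_below: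
  "1 \<le> J \<Longrightarrow> card {p\<in>block R i. \<sigma> p < C J} = (\<Sum>j\<in>{1..<J}. block_count \<sigma> i j)"
  unfolding block_count_def
  by (rule card_less_eq_sum_blocks[OF mono_C C_1]) (auto simp: block_def)

lemma card_col_block_above:
  assumes "1 \<le> I" "I \<le> Suc m"
  shows "card {p. p < R I \<and> \<sigma> p \<in> block C j} = (\<Sum>i\<in>{1..<I}. block_count \<sigma> i j)"
proof -
  define A where "A = {p. p < d \<and> \<sigma> p \<in> block C j}"
  have "card {p\<in>A. id p < R I} = (\<Sum>i\<in>{1..<I}. card {p\<in>A. id p \<in> block R i})"
    by (rule card_less_eq_sum_blocks[OF mono_R R_1 _ assms(1)]) (simp add: A_def)
  moreover have "{p\<in>A. id p < R I} = {p. p < R I \<and> \<sigma> p \<in> block C j}"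
    using R_le_d[OF assms(2)] by (auto simp: A_def)
  moreover have "{p\<in>A. id p \<in> block R i} = {p\<in>block R i. \<sigma> p \<in> block C j}" if "i \<in> {1..<I}" for i
    using that assms R_le_d[of "Suc i"] by (auto simp: A_def block_def)
  ultimately show ?thesis unfolding block_count_def by simp
qed

lemma row_offset_split:
  assumes rows: "perm_nw_se_rows \<sigma>" and i: "i \<in> {1..m}"
    and pi: "p \<in> block R i" and pj: "\<sigma> p \<in> block C j"
  shows "p - R i = card {p'\<in>block R i. \<sigma> p' < C j}
                 + card {p'\<in>block R i. p' < p \<and> \<sigma> p' \<in> block C j}"
proof -
  define A where "A = {p'\<in>block R i. \<sigma> p' < C j}"
  define X where "X = {p'\<in>block R i. p' < p \<and> \<sigma> p' \<in> block C j}"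
  have "{p'\<in>block R i. p' < p} = A \<union> X"
  proof (intro equalityI subsetI)
    fix x assume x: "x \<in> {p'\<in>block R i. p' < p}"
    then have "\<sigma> x < \<sigma> p" using rows i pi unfolding perm_nw_se_rows_def by blast
    then show "x \<in> A \<union> X" using x pj by (auto simp: A_def X_def block_def)
  next
    fix x assume x: "x \<in> A \<union> X"
    show "x \<in> {p'\<in>block R i. p' < p}"
    proof (cases "x \<in> X")
      case False
      then have xA: "x \<in> block R i" "\<sigma> x < C j" using x by (auto simp: A_def)
      have "\<not> p \<le> x"
      proof
        assume "p \<le> x"
        then have "\<sigma> p \<le> \<sigma> x"
          using rows i pi xA(1) unfolding perm_nw_se_rows_def by (metis order.order_iff_strict)
        then show False using xA pj by (simp add: block_def)
      qed
      then show ?thesis using xA by simp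
    qed (simp add: X_def)
  qed
  moreover have "{p'\<in>block R i. p' < p} = {R i..<p}" using pi by (auto simp: block_def)
  moreover have "A \<inter> X = {}" by (auto simp: A_def X_def block_def)
  ultimately have "p - R i = card (A \<union> X)" by (metis card_atLeastLessThan)
  also have "\<dots> = card A + card X"
    by (rule card_Un_disjoint) (auto simp: A_def X_def block_def \<open>A \<inter> X = {}\<close>)
  finally show ?thesis by (simp add: A_def X_def)
qed

lemma col_offset_split:
  assumes perm: "\<sigma> permutes {..<d}" and cols: "perm_nw_se_cols \<sigma>" and p: "p < d"
    and j: "j \<in> {1..m}" and pi: "p \<in> block R i" and pj: "\<sigma> p \<in> block C j"
  shows "\<sigma> p - C j = card {p'. p' < R i \<and> \<sigma> p' \<in> block C j}
                   + card {p'\<in>block R i. p' < p \<and> \<sigma> p' \<in> block C j}"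
proof -
  define H where "H = {p'. p' < R i \<and> \<sigma> p' \<in> block C j}"
  define X where "X = {p'\<in>block R i. p' < p \<and> \<sigma> p' \<in> block C j}"
  define Y where "Y = {p'. p' < d \<and> C j \<le> \<sigma> p' \<and> \<sigma> p' < \<sigma> p}"
  have inj: "inj_on \<sigma> {..<d}" using perm permutes_inj_on by blast
  have "\<sigma> ` Y = {C j..<\<sigma> p}"
  proof (intro equalityI subsetI)
    fix q assume q: "q \<in> {C j..<\<sigma> p}"
    moreover have "\<sigma> p < d" using permutes_in_image[OF perm] p by simp
    ultimately have "q < d" by simp
    then have "q \<in> \<sigma> ` {..<d}" using permutes_image[OF perm] by simp
    then show "q \<in> \<sigma> ` Y" using q by (auto simp: Y_def)
  qed (auto simp: Y_def)
  moreover have "inj_on \<sigma> Y" using inj by (rule inj_on_subset) (auto simp: Y_def)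
  ultimately have card_Y: "card Y = \<sigma> p - C j" by (simp add: card_image[symmetric])
  have "Y = H \<union> X"
  proof (intro equalityI subsetI)
    fix x assume x: "x \<in> Y"
    then have xd: "x < d" and xj: "\<sigma> x \<in> block C j" and lt: "\<sigma> x < \<sigma> p"
      using pj by (auto simp: Y_def block_def)
    have "x < p" using cols j xd p xj pj lt unfolding perm_nw_se_cols_def by blast
    then show "x \<in> H \<union> X" using xj pi by (cases "x < R i") (auto simp: H_def X_def block_def)
  next
    fix x assume x: "x \<in> H \<union> X"
    then have xj: "\<sigma> x \<in> block C j" and xp: "x < p" using pi by (auto simp: H_def X_def block_def)
    then have xd: "x < d" using p by simp
    have "x \<noteq> p" using xp by simp
    then have "\<sigma> x \<noteq> \<sigma> p" using inj xd p by (meson inj_on_contraD lessThan_iff)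
    moreover have "\<not> \<sigma> p < \<sigma> x"
    proof
      assume "\<sigma> p < \<sigma> x"
      then have "p < x" using cols j xd p xj pj unfolding perm_nw_se_cols_def by blast
      then show False using xp by simp
    qed
    ultimately show "x \<in> Y" using xj xd by (auto simp: Y_def block_def)
  qed
  moreover have "H \<inter> X = {}" by (auto simp: H_def X_def block_def)
  ultimately have "card Y = card H + card X"
    by (simp add: card_Un_disjoint H_def X_def block_def)
  then show ?thesis using card_Y by (simp add: H_def X_def)
qed

lemma row_offset_bounds:
  assumes rows: "perm_nw_se_rows \<sigma>" and i: "i \<in> {1..m}"
    and pi: "p \<in> block R i" and pj: "\<sigma> p \<in> block C j"
  shows "card {p'\<in>block R i. \<sigma> p' < C j} \<le> p - R i"
    and "p - R i < card {p'\<in>block R i. \<sigma> p' < C (Suc j)}"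
proof -
  define A where "A = {p'\<in>block R i. \<sigma> p' < C j}"
  define B where "B = {p'\<in>block R i. \<sigma> p' \<in> block C j}"
  define X where "X = {p'\<in>block R i. p' < p \<and> \<sigma> p' \<in> block C j}"
  have split: "p - R i = card A + card X"
    unfolding A_def X_def by (rule row_offset_split[OF rows i pi pj])
  then show "card {p'\<in>block R i. \<sigma> p' < C j} \<le> p - R i" by (simp add: A_def)
  have "X \<subset> B" using pi pj by (auto simp: X_def B_def)
  moreover have "finite B" by (simp add: B_def block_def)
  ultimately have "card X < card B" using psubset_card_mono by blast
  moreover have "{p'\<in>block R i. \<sigma> p' < C (Suc j)} = A \<union> B"
    using monoD[OF mono_C, of j "Suc j"] by (auto simp: A_def B_def block_def)
  moreover have "card (A \<union> B) = card A + card B"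
    by (rule card_Un_disjoint) (auto simp: A_def B_def block_def)
  ultimately show "p - R i < card {p'\<in>block R i. \<sigma> p' < C (Suc j)}" using split by simp
qed

definition row_prefix :: "(nat \<Rightarrow> nat) \<Rightarrow> nat \<Rightarrow> nat \<Rightarrow> nat" where
  "row_prefix \<sigma> i J = (\<Sum>j\<in>{1..<J}. block_count \<sigma> i j)"

definition col_prefix :: "(nat \<Rightarrow> nat) \<Rightarrow> nat \<Rightarrow> nat \<Rightarrow> nat" where
  "col_prefix \<sigma> I j = (\<Sum>i\<in>{1..<I}. block_count \<sigma> i j)"

lemma mono_row_prefix: "mono (row_prefix \<sigma> i)"
  unfolding row_prefix_def by (rule monoI, rule sum_mono2) auto

lemma col_prefix_mono: "I1 \<le> I2 \<Longrightarrow> col_prefix \<sigma> I1 j \<le> col_prefix \<sigma> I2 j"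
  unfolding col_prefix_def by (rule sum_mono2) auto

lemma row_prefix_1: "row_prefix \<sigma> i 1 = 0"
  unfolding row_prefix_def by simp

lemma row_prefix_Suc: "1 \<le> j \<Longrightarrow> row_prefix \<sigma> i (Suc j) = row_prefix \<sigma> i j + block_count \<sigma> i j"
  unfolding row_prefix_def by simp

lemma col_prefix_Suc: "1 \<le> i \<Longrightarrow> col_prefix \<sigma> (Suc i) j = col_prefix \<sigma> i j + block_count \<sigma> i j"
  unfolding col_prefix_def by simp

lemma row_prefix_cong:
  assumes "\<forall>i\<in>{1..m}. \<forall>j\<in>{1..m}. block_count \<sigma>1 i j = block_count \<sigma>2 i j"
    and "i \<in> {1..m}" "J \<le> Suc m"
  shows "row_prefix \<sigma>1 i J = row_prefix \<sigma>2 i J"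
  unfolding row_prefix_def using assms by (intro sum.cong) auto

lemma col_prefix_cong:
  assumes "\<forall>i\<in>{1..m}. \<forall>j\<in>{1..m}. block_count \<sigma>1 i j = block_count \<sigma>2 i j"
    and "j \<in> {1..m}" "I \<le> Suc m"
  shows "col_prefix \<sigma>1 I j = col_prefix \<sigma>2 I j"
  unfolding col_prefix_def using assms by (intro sum.cong) auto

lemma row_prefix_total:
  assumes perm: "\<sigma> permutes {..<d}" and i: "i \<in> {1..m}"
  shows "row_prefix \<sigma> i (Suc m) = R (Suc i) - R i"
proof -
  have "row_prefix \<sigma> i (Suc m) = card {p\<in>block R i. \<sigma> p < C (Suc m)}"
    unfolding row_prefix_def using card_row_block_below by simp
  also have "{p\<in>block R i. \<sigma> p < C (Suc m)} = block R i"
    using row_block_less_d[OF i] permutes_in_image[OF perm] C_last by auto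
  finally show ?thesis by (simp add: block_def)
qed

lemma col_prefix_total:
  assumes perm: "\<sigma> permutes {..<d}" and j: "j \<in> {1..m}"
  shows "col_prefix \<sigma> (Suc m) j = C (Suc j) - C j"
proof -
  have "col_prefix \<sigma> (Suc m) j = card {p. p < d \<and> \<sigma> p \<in> block C j}"
    unfolding col_prefix_def using card_col_block_above[of "Suc m"] R_last by simp
  also have "\<dots> = card (\<sigma> ` {p. p < d \<and> \<sigma> p \<in> block C j})"
    using permutes_inj_on[OF perm] by (intro card_image[symmetric]) (auto intro: inj_on_subset)
  also have "\<sigma> ` {p. p < d \<and> \<sigma> p \<in> block C j} = block C j"
  proof (intro equalityI subsetI)
    fix q assume q: "q \<in> block C j"
    then have "q \<in> \<sigma> ` {..<d}" using col_block_less_d[OF j] permutes_image[OF perm] by simp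
    then show "q \<in> \<sigma> ` {p. p < d \<and> \<sigma> p \<in> block C j}" using q by auto
  qed auto
  finally show ?thesis by (simp add: block_def)
qed

lemma nw_se_perm_position:
  assumes perm: "\<sigma> permutes {..<d}" and rows: "perm_nw_se_rows \<sigma>" and cols: "perm_nw_se_cols \<sigma>"
    and p: "p < d" and i: "i \<in> {1..m}" and j: "j \<in> {1..m}"
    and pi: "p \<in> block R i" and pj: "\<sigma> p \<in> block C j"
  shows "p - R i \<in> block (row_prefix \<sigma> i) j"
    and "\<sigma> p = C j + col_prefix \<sigma> i j + (p - R i - row_prefix \<sigma> i j)"
proof -
  have J: "\<And>J. 1 \<le> J \<Longrightarrow> card {p'\<in>block R i. \<sigma> p' < C J} = row_prefix \<sigma> i J"
    unfolding row_prefix_def by (rule card_row_block_below)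
  have I: "card {p'. p' < R i \<and> \<sigma> p' \<in> block C j} = col_prefix \<sigma> i j"
    unfolding col_prefix_def using i by (intro card_col_block_above) auto
  show "p - R i \<in> block (row_prefix \<sigma> i) j"
    using row_offset_bounds[OF rows i pi pj] J[of j] J[of "Suc j"] j by (simp add: block_def)
  have "C j \<le> \<sigma> p" using pj by (simp add: block_def)
  then show "\<sigma> p = C j + col_prefix \<sigma> i j + (p - R i - row_prefix \<sigma> i j)"
    using row_offset_split[OF rows i pi pj] col_offset_split[OF perm cols p j pi pj] I J[of j] j
    by simp
qed

theorem nw_se_perm_unique:
  assumes \<sigma>1: "\<sigma>1 permutes {..<d}" "perm_nw_se_rows \<sigma>1" "perm_nw_se_cols \<sigma>1"
    and \<sigma>2: "\<sigma>2 permutes {..<d}" "perm_nw_se_rows \<sigma>2" "perm_nw_se_cols \<sigma>2"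
    and counts: "\<forall>i\<in>{1..m}. \<forall>j\<in>{1..m}. block_count \<sigma>1 i j = block_count \<sigma>2 i j"
  shows "\<sigma>1 = \<sigma>2"
proof
  fix p
  show "\<sigma>1 p = \<sigma>2 p"
  proof (cases "p < d")
    case False
    then show ?thesis using \<sigma>1(1) \<sigma>2(1) by (simp add: permutes_def)
  next
    case p: True
    obtain i where i: "i \<in> {1..m}" "p \<in> block R i" using row_block_exists[OF p] by blast
    obtain j1 where j1: "j1 \<in> {1..m}" "\<sigma>1 p \<in> block C j1"
      using col_block_exists permutes_in_image[OF \<sigma>1(1)] p by blast
    obtain j2 where j2: "j2 \<in> {1..m}" "\<sigma>2 p \<in> block C j2"
      using col_block_exists permutes_in_image[OF \<sigma>2(1)] p by blast
    note pos1 = nw_se_perm_position[OF \<sigma>1 p i(1) j1(1) i(2) j1(2)]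
    note pos2 = nw_se_perm_position[OF \<sigma>2 p i(1) j2(1) i(2) j2(2)]
    have "p - R i \<in> block (row_prefix \<sigma>1 i) j2"
      using pos2(1) row_prefix_cong[OF counts i(1), of j2] row_prefix_cong[OF counts i(1), of "Suc j2"] j2(1)
      by (simp add: block_def)
    then have "j1 = j2" using pos1(1) block_unique[OF mono_row_prefix] by blast
    then show ?thesis
      using pos1(2) pos2(2) row_prefix_cong[OF counts i(1), of j1] col_prefix_cong[OF counts j1(1), of i] i(1) j1(1)
      by simp
  qed
qed

text \<open>The formula of \<open>nw_se_perm_position\<close>, taken as a definition.\<close>
definition nw_se_perm :: "(nat \<Rightarrow> nat) \<Rightarrow> nat \<Rightarrow> nat" where
  "nw_se_perm \<sigma> p = (if p < d then
     (let i = (THE i. i \<in> {1..m} \<and> p \<in> block R i);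
          j = (THE j. j \<in> {1..m} \<and> p - R i \<in> block (row_prefix \<sigma> i) j)
      in C j + col_prefix \<sigma> i j + (p - R i - row_prefix \<sigma> i j)) else p)"

lemma offset_less_block_count:
  "1 \<le> j \<Longrightarrow> x \<in> block (row_prefix \<sigma> i) j \<Longrightarrow> x - row_prefix \<sigma> i j < block_count \<sigma> i j"
  using row_prefix_Suc[of j \<sigma> i] by (auto simp: block_def)

lemma col_offset_less_col_prefix:
  assumes "i1 \<in> {1..m}" "i1 < i2" "1 \<le> j" "x \<in> block (row_prefix \<sigma> i1) j"
  shows "col_prefix \<sigma> i1 j + (x - row_prefix \<sigma> i1 j) < col_prefix \<sigma> i2 j"
  using offset_less_block_count[OF assms(3,4)] col_prefix_Suc[of i1 \<sigma> j]
    col_prefix_mono[of "Suc i1" i2 \<sigma> j] assms(1,2) by simp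

lemma nw_se_perm_position_cases:
  assumes perm: "\<sigma> permutes {..<d}" and p: "p < d"
  obtains i j where "i \<in> {1..m}" "p \<in> block R i" "j \<in> {1..m}" "p - R i \<in> block (row_prefix \<sigma> i) j"
    "nw_se_perm \<sigma> p = C j + col_prefix \<sigma> i j + (p - R i - row_prefix \<sigma> i j)"
    "nw_se_perm \<sigma> p \<in> block C j"
proof -
  obtain i where i: "i \<in> {1..m}" "p \<in> block R i" using row_block_exists[OF p] by blast
  have the_i: "(THE i. i \<in> {1..m} \<and> p \<in> block R i) = i"
    using i block_unique[OF mono_R] by blast
  have "p - R i < row_prefix \<sigma> i (Suc m)"
    using row_prefix_total[OF perm i(1)] i(2) by (auto simp: block_def)
  then obtain j where j: "j \<in> {1..m}" "p - R i \<in> block (row_prefix \<sigma> i) j"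
    using block_exists[OF mono_row_prefix, of \<sigma> i "p - R i" m] row_prefix_1 by auto
  have the_j: "(THE j. j \<in> {1..m} \<and> p - R i \<in> block (row_prefix \<sigma> i) j) = j"
    using j block_unique[OF mono_row_prefix] by blast
  have val: "nw_se_perm \<sigma> p = C j + col_prefix \<sigma> i j + (p - R i - row_prefix \<sigma> i j)"
    using p unfolding nw_se_perm_def the_i the_j Let_def by simp
  have "col_prefix \<sigma> i j + (p - R i - row_prefix \<sigma> i j) < col_prefix \<sigma> (Suc m) j"
    using col_offset_less_col_prefix[OF i(1) _ _ j(2)] i(1) j(1) by simp
  then have "nw_se_perm \<sigma> p \<in> block C j"
    using val col_prefix_total[OF perm j(1)] by (simp add: block_def)
  with i j val that show ?thesis by blast
qed

lemma nw_se_perm_less_d: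
  assumes "\<sigma> permutes {..<d}" "p < d"
  shows "nw_se_perm \<sigma> p < d"
  using assms col_block_less_d by (metis nw_se_perm_position_cases)

lemma inj_on_nw_se_perm:
  assumes perm: "\<sigma> permutes {..<d}"
  shows "inj_on (nw_se_perm \<sigma>) {..<d}"
proof (rule inj_onI)
  fix p1 p2 assume "p1 \<in> {..<d}" "p2 \<in> {..<d}" and eq: "nw_se_perm \<sigma> p1 = nw_se_perm \<sigma> p2"
  then obtain i1 j1 i2 j2 where
    a: "i1 \<in> {1..m}" "p1 \<in> block R i1" "j1 \<in> {1..m}" "p1 - R i1 \<in> block (row_prefix \<sigma> i1) j1"
      "nw_se_perm \<sigma> p1 = C j1 + col_prefix \<sigma> i1 j1 + (p1 - R i1 - row_prefix \<sigma> i1 j1)"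
      "nw_se_perm \<sigma> p1 \<in> block C j1"
    and b: "i2 \<in> {1..m}" "p2 \<in> block R i2" "j2 \<in> {1..m}" "p2 - R i2 \<in> block (row_prefix \<sigma> i2) j2"
      "nw_se_perm \<sigma> p2 = C j2 + col_prefix \<sigma> i2 j2 + (p2 - R i2 - row_prefix \<sigma> i2 j2)"
      "nw_se_perm \<sigma> p2 \<in> block C j2"
    using nw_se_perm_position_cases[OF perm] by (metis lessThan_iff)
  have j: "j1 = j2" using a(6) b(6) eq block_unique[OF mono_C] by simp
  have i: "i1 = i2"
  proof (rule ccontr)
    assume "i1 \<noteq> i2"
    then consider "i1 < i2" | "i2 < i1" by linarith
    then show False
    proof cases
      case 1
      then show False using col_offset_less_col_prefix[OF a(1) 1 _ a(4)] a(3,5) b(5) eq j by simp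
    next
      case 2
      then show False using col_offset_less_col_prefix[OF b(1) 2 _ b(4)] b(3,5) a(5) eq j by simp
    qed
  qed
  show "p1 = p2" using eq a(2,4,5) b(2,4,5) i j by (auto simp: block_def)
qed

lemma nw_se_perm_permutes:
  assumes perm: "\<sigma> permutes {..<d}"
  shows "nw_se_perm \<sigma> permutes {..<d}"
proof (rule bij_imp_permutes)
  have "nw_se_perm \<sigma> ` {..<d} = {..<d}"
    using endo_inj_surj[of "{..<d}" "nw_se_perm \<sigma>"] nw_se_perm_less_d[OF perm] inj_on_nw_se_perm[OF perm]
    by auto
  then show "bij_betw (nw_se_perm \<sigma>) {..<d} {..<d}"
    using inj_on_nw_se_perm[OF perm] by (simp add: bij_betw_def)
  show "\<And>x. x \<notin> {..<d} \<Longrightarrow> nw_se_perm \<sigma> x = x" by (simp add: nw_se_perm_def)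
qed

lemma block_count_nw_se_perm:
  assumes perm: "\<sigma> permutes {..<d}" and i: "i \<in> {1..m}" and j: "j \<in> {1..m}"
  shows "block_count (nw_se_perm \<sigma>) i j = block_count \<sigma> i j"
proof -
  have "row_prefix \<sigma> i (Suc j) \<le> R (Suc i) - R i"
    using row_prefix_total[OF perm i] monoD[OF mono_row_prefix[of \<sigma> i], of "Suc j" "Suc m"] j by simp
  then have sub: "{R i + row_prefix \<sigma> i j ..< R i + row_prefix \<sigma> i (Suc j)} \<subseteq> block R i"
    by (auto simp: block_def)
  have "{p\<in>block R i. nw_se_perm \<sigma> p \<in> block C j}
      = {R i + row_prefix \<sigma> i j ..< R i + row_prefix \<sigma> i (Suc j)}"
  proof (intro equalityI subsetI)
    fix p assume p: "p \<in> {p\<in>block R i. nw_se_perm \<sigma> p \<in> block C j}"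
    obtain i1 j1 where a: "i1 \<in> {1..m}" "p \<in> block R i1" "j1 \<in> {1..m}"
      "p - R i1 \<in> block (row_prefix \<sigma> i1) j1" "nw_se_perm \<sigma> p \<in> block C j1"
      using nw_se_perm_position_cases[OF perm row_block_less_d[OF i]] p by (metis (no_types, lifting) mem_Collect_eq)
    have "i1 = i" using a(2) p block_unique[OF mono_R] by blast
    moreover have "j1 = j" using a(5) p block_unique[OF mono_C] by blast
    ultimately show "p \<in> {R i + row_prefix \<sigma> i j ..< R i + row_prefix \<sigma> i (Suc j)}"
      using a(2,4) by (auto simp: block_def)
  next
    fix p assume p: "p \<in> {R i + row_prefix \<sigma> i j ..< R i + row_prefix \<sigma> i (Suc j)}"
    then have pi: "p \<in> block R i" using sub by blast
    obtain i1 j1 where a: "i1 \<in> {1..m}" "p \<in> block R i1" "j1 \<in> {1..m}"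
      "p - R i1 \<in> block (row_prefix \<sigma> i1) j1" "nw_se_perm \<sigma> p \<in> block C j1"
      using nw_se_perm_position_cases[OF perm row_block_less_d[OF i pi]] by metis
    have "i1 = i" using a(2) pi block_unique[OF mono_R] by blast
    moreover have "p - R i \<in> block (row_prefix \<sigma> i) j" using p by (auto simp: block_def)
    ultimately have "j1 = j" using a(4) block_unique[OF mono_row_prefix] by blast
    then show "p \<in> {p\<in>block R i. nw_se_perm \<sigma> p \<in> block C j}" using pi a(5) by simp
  qed
  then show ?thesis using row_prefix_Suc[of j \<sigma> i] j unfolding block_count_def by simp
qed

lemma nw_se_perm_rows:
  assumes perm: "\<sigma> permutes {..<d}"
  shows "perm_nw_se_rows (nw_se_perm \<sigma>)"
  unfolding perm_nw_se_rows_def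
proof (intro ballI allI impI)
  fix k p1 p2 assume k: "k \<in> {1..m}" and p1: "p1 \<in> block R k" and p2: "p2 \<in> block R k"
    and lt: "p1 < p2"
  obtain i1 j1 where a: "i1 \<in> {1..m}" "p1 \<in> block R i1" "j1 \<in> {1..m}"
      "p1 - R i1 \<in> block (row_prefix \<sigma> i1) j1"
      "nw_se_perm \<sigma> p1 = C j1 + col_prefix \<sigma> i1 j1 + (p1 - R i1 - row_prefix \<sigma> i1 j1)"
      "nw_se_perm \<sigma> p1 \<in> block C j1"
    using nw_se_perm_position_cases[OF perm row_block_less_d[OF k p1]] by metis
  obtain i2 j2 where b: "i2 \<in> {1..m}" "p2 \<in> block R i2" "j2 \<in> {1..m}"
      "p2 - R i2 \<in> block (row_prefix \<sigma> i2) j2"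
      "nw_se_perm \<sigma> p2 = C j2 + col_prefix \<sigma> i2 j2 + (p2 - R i2 - row_prefix \<sigma> i2 j2)"
      "nw_se_perm \<sigma> p2 \<in> block C j2"
    using nw_se_perm_position_cases[OF perm row_block_less_d[OF k p2]] by metis
  have i: "i1 = k" "i2 = k" using a(2) b(2) p1 p2 block_unique[OF mono_R] by blast+
  have off: "p1 - R k < p2 - R k" using lt p1 by (auto simp: block_def)
  have "\<not> j2 < j1"
  proof
    assume "j2 < j1"
    then have "row_prefix \<sigma> k (Suc j2) \<le> row_prefix \<sigma> k j1" using mono_row_prefix by (simp add: monoD)
    then show False using a(4) b(4) i off by (auto simp: block_def)
  qed
  then consider "j1 < j2" | "j1 = j2" by linarith
  then show "nw_se_perm \<sigma> p1 < nw_se_perm \<sigma> p2"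
  proof cases
    case 1
    then have "C (Suc j1) \<le> C j2" using mono_C by (simp add: monoD)
    then show ?thesis using a(6) b(6) by (auto simp: block_def)
  next
    case 2
    then show ?thesis using a(4,5) b(4,5) i off by (auto simp: block_def)
  qed
qed

lemma nw_se_perm_cols:
  assumes perm: "\<sigma> permutes {..<d}"
  shows "perm_nw_se_cols (nw_se_perm \<sigma>)"
  unfolding perm_nw_se_cols_def
proof (intro ballI allI impI)
  fix k p1 p2 assume k: "k \<in> {1..m}" and p1: "p1 < d" and p2: "p2 < d"
    and t1: "nw_se_perm \<sigma> p1 \<in> block C k" and t2: "nw_se_perm \<sigma> p2 \<in> block C k"
    and lt: "nw_se_perm \<sigma> p1 < nw_se_perm \<sigma> p2"
  obtain i1 j1 where a: "i1 \<in> {1..m}" "p1 \<in> block R i1" "j1 \<in> {1..m}"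
      "p1 - R i1 \<in> block (row_prefix \<sigma> i1) j1"
      "nw_se_perm \<sigma> p1 = C j1 + col_prefix \<sigma> i1 j1 + (p1 - R i1 - row_prefix \<sigma> i1 j1)"
      "nw_se_perm \<sigma> p1 \<in> block C j1"
    using nw_se_perm_position_cases[OF perm p1] by metis
  obtain i2 j2 where b: "i2 \<in> {1..m}" "p2 \<in> block R i2" "j2 \<in> {1..m}"
      "p2 - R i2 \<in> block (row_prefix \<sigma> i2) j2"
      "nw_se_perm \<sigma> p2 = C j2 + col_prefix \<sigma> i2 j2 + (p2 - R i2 - row_prefix \<sigma> i2 j2)"
      "nw_se_perm \<sigma> p2 \<in> block C j2"
    using nw_se_perm_position_cases[OF perm p2] by metis
  have j: "j1 = k" "j2 = k" using a(6) b(6) t1 t2 block_unique[OF mono_C] by blast+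
  consider "i1 < i2" | "i1 = i2" | "i2 < i1" by linarith
  then show "p1 < p2"
  proof cases
    case 1
    then have "R (Suc i1) \<le> R i2" using mono_R by (simp add: monoD)
    then show ?thesis using a(2) b(2) by (auto simp: block_def)
  next
    case 2
    then show ?thesis using a(2,4,5) b(2,4,5) j lt by (auto simp: block_def)
  next
    case 3
    then show ?thesis using col_offset_less_col_prefix[OF b(1) 3 _ b(4)] a(5) b(3,5) j lt by simp
  qed
qed

theorem ex1_nw_se_perm:
  assumes "\<sigma> permutes {..<d}"
  shows "\<exists>!\<tau>. \<tau> permutes {..<d} \<and> perm_nw_se_rows \<tau> \<and> perm_nw_se_cols \<tau> \<and>
    (\<forall>i\<in>{1..m}. \<forall>j\<in>{1..m}. block_count \<tau> i j = block_count \<sigma> i j)"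
proof (rule ex1I)
  show "nw_se_perm \<sigma> permutes {..<d} \<and> perm_nw_se_rows (nw_se_perm \<sigma>) \<and>
      perm_nw_se_cols (nw_se_perm \<sigma>) \<and>
      (\<forall>i\<in>{1..m}. \<forall>j\<in>{1..m}. block_count (nw_se_perm \<sigma>) i j = block_count \<sigma> i j)"
    using assms nw_se_perm_permutes nw_se_perm_rows nw_se_perm_cols block_count_nw_se_perm by blast
  then show "\<tau> = nw_se_perm \<sigma>"
    if "\<tau> permutes {..<d} \<and> perm_nw_se_rows \<tau> \<and> perm_nw_se_cols \<tau> \<and>
      (\<forall>i\<in>{1..m}. \<forall>j\<in>{1..m}. block_count \<tau> i j = block_count \<sigma> i j)" for \<tau>
    using that nw_se_perm_unique by simp
qed

end

lemma card_rectangle: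
  fixes \<sigma> :: "nat \<Rightarrow> nat"
  assumes "a1 \<le> a2" "b1 \<le> b2"
  shows "card {p. a1 \<le> p \<and> p < a2 \<and> b1 \<le> \<sigma> p \<and> \<sigma> p < b2} + card {p. p < a1 \<and> \<sigma> p < b2}
       + card {p. p < a2 \<and> \<sigma> p < b1}
     = card {p. p < a2 \<and> \<sigma> p < b2} + card {p. p < a1 \<and> \<sigma> p < b1}"
proof -
  define X1 where "X1 = {p. p < a1 \<and> \<sigma> p < b2}"
  define X2 where "X2 = {p. a1 \<le> p \<and> p < a2 \<and> \<sigma> p < b1}"
  define X3 where "X3 = {p. a1 \<le> p \<and> p < a2 \<and> b1 \<le> \<sigma> p \<and> \<sigma> p < b2}"
  define Y where "Y = {p. p < a1 \<and> \<sigma> p < b1}"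
  have fin: "finite X1" "finite X2" "finite X3" "finite Y"
    using assms by (auto simp: X1_def X2_def X3_def Y_def)
  have "{p. p < a2 \<and> \<sigma> p < b2} = X1 \<union> (X2 \<union> X3)" "{p. p < a2 \<and> \<sigma> p < b1} = Y \<union> X2"
    using assms by (auto simp: X1_def X2_def X3_def Y_def)
  moreover have "card (X2 \<union> X3) = card X2 + card X3"
    using fin by (intro card_Un_disjoint) (auto simp: X2_def X3_def)
  moreover have "card (X1 \<union> (X2 \<union> X3)) = card X1 + card (X2 \<union> X3)"
    using fin by (intro card_Un_disjoint) (auto simp: X1_def X2_def X3_def)
  moreover have "card (Y \<union> X2) = card Y + card X2"
    using fin by (intro card_Un_disjoint) (auto simp: X2_def Y_def)
  ultimately show ?thesis by (simp add: X1_def X3_def Y_def)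
qed

definition perm_matrix :: "nat \<Rightarrow> (nat \<Rightarrow> nat) \<Rightarrow> 'a::field mat" where
  "perm_matrix d \<sigma> = mat d d (\<lambda>(p, q). if \<sigma> p = q then 1 else 0)"

lemma perm_mat_iff_perm_matrix:
  "perm_mat d P \<longleftrightarrow> (\<exists>\<sigma>. \<sigma> permutes {..<d} \<and> P = perm_matrix d \<sigma>)"
proof
  assume "perm_mat d P"
  then obtain \<sigma> where "P \<in> carrier_mat d d" "\<sigma> permutes {..<d}"
    "\<forall>p<d. \<forall>q<d. P $$ (p, q) = (if \<sigma> p = q then 1 else 0)"
    unfolding perm_mat_def by blast
  moreover from this have "P = perm_matrix d \<sigma>" by (intro eq_matI) (auto simp: perm_matrix_def)
  ultimately show "\<exists>\<sigma>. \<sigma> permutes {..<d} \<and> P = perm_matrix d \<sigma>" by blast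
qed (auto simp: perm_mat_def perm_matrix_def)

lemma perm_matrix_eq_1_iff: "p < d \<Longrightarrow> q < d \<Longrightarrow> perm_matrix d \<sigma> $$ (p, q) = 1 \<longleftrightarrow> q = \<sigma> p"
  by (simp add: perm_matrix_def)

context block_partition
begin

lemma block_count_rectangle:
  "block_count \<sigma> i j = card {p. R i \<le> p \<and> p < R (Suc i) \<and> C j \<le> \<sigma> p \<and> \<sigma> p < C (Suc j)}"
  unfolding block_count_def block_def by (rule arg_cong[of _ _ card]) auto

lemma card_perm_matrix_block:
  assumes i: "i \<in> {1..m}" and j: "j \<in> {1..m}"
  shows "card {(p, q). p \<in> block R i \<and> q \<in> block C j \<and> perm_matrix d \<sigma> $$ (p, q) = (1::'a::field)}
       = block_count \<sigma> i j"
proof -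
  have "{(p, q). p \<in> block R i \<and> q \<in> block C j \<and> perm_matrix d \<sigma> $$ (p, q) = (1::'a)}
      = (\<lambda>p. (p, \<sigma> p)) ` {p\<in>block R i. \<sigma> p \<in> block C j}"
  proof (intro equalityI subsetI)
    fix x assume "x \<in> {(p, q). p \<in> block R i \<and> q \<in> block C j \<and> perm_matrix d \<sigma> $$ (p, q) = (1::'a)}"
    then obtain p q where x: "x = (p, q)" "p \<in> block R i" "q \<in> block C j"
      "perm_matrix d \<sigma> $$ (p, q) = (1::'a)" by blast
    then have "q = \<sigma> p"
      using perm_matrix_eq_1_iff[OF row_block_less_d[OF i x(2)] col_block_less_d[OF j x(3)], where 'a='a]
      by simp
    then show "x \<in> (\<lambda>p. (p, \<sigma> p)) ` {p\<in>block R i. \<sigma> p \<in> block C j}" using x by blast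
  next
    fix x assume "x \<in> (\<lambda>p. (p, \<sigma> p)) ` {p\<in>block R i. \<sigma> p \<in> block C j}"
    then obtain p where x: "x = (p, \<sigma> p)" "p \<in> block R i" "\<sigma> p \<in> block C j" by blast
    then show "x \<in> {(p, q). p \<in> block R i \<and> q \<in> block C j \<and> perm_matrix d \<sigma> $$ (p, q) = (1::'a)}"
      using perm_matrix_eq_1_iff[OF row_block_less_d[OF i x(2)] col_block_less_d[OF j x(3)], where 'a='a]
      by simp
  qed
  moreover have "inj_on (\<lambda>p. (p, \<sigma> p)) {p\<in>block R i. \<sigma> p \<in> block C j}" by (rule inj_onI) simp
  ultimately show ?thesis unfolding block_count_def by (simp add: card_image)
qed

end

section \<open>Ranks of northwest corners\<close>

definition indep_cols :: "'a::field mat \<Rightarrow> nat \<Rightarrow> nat set \<Rightarrow> bool" where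
  "indep_cols Z a S \<longleftrightarrow>
     (\<forall>c. (\<forall>p<a. (\<Sum>j\<in>S. c j * Z $$ (p, j)) = 0) \<longrightarrow> (\<forall>j\<in>S. c j = 0))"

definition in_col_span :: "'a::field mat \<Rightarrow> nat \<Rightarrow> nat \<Rightarrow> nat set \<Rightarrow> bool" where
  "in_col_span Z a k S \<longleftrightarrow> (\<exists>c. \<forall>p<a. Z $$ (p, k) = (\<Sum>j\<in>S. c j * Z $$ (p, j)))"

definition nw_rank :: "'a::field mat \<Rightarrow> nat \<Rightarrow> nat \<Rightarrow> nat" where
  "nw_rank Z a b = Max (card ` {S. S \<subseteq> {..<b} \<and> indep_cols Z a S})"

lemma indep_cols_empty: "indep_cols Z a {}"
  by (simp add: indep_cols_def)

lemma finite_indep_col_sets: "finite {S. S \<subseteq> {..<b} \<and> indep_cols Z a S}"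
  by (rule finite_subset[of _ "Pow {..<b}"]) auto

lemma card_le_nw_rank: "S \<subseteq> {..<b} \<Longrightarrow> indep_cols Z a S \<Longrightarrow> card S \<le> nw_rank Z a b"
  unfolding nw_rank_def by (rule Max_ge) (use finite_indep_col_sets in auto)

lemma nw_rank_witness:
  obtains S where "S \<subseteq> {..<b}" "indep_cols Z a S" "card S = nw_rank Z a b"
proof -
  have "nw_rank Z a b \<in> card ` {S. S \<subseteq> {..<b} \<and> indep_cols Z a S}"
    unfolding nw_rank_def by (rule Max_in) (use finite_indep_col_sets indep_cols_empty in auto)
  then show ?thesis using that by auto
qed

lemma nw_rank_0_cols: "nw_rank Z a 0 = 0"
proof -
  obtain S where "S \<subseteq> {..<0}" "indep_cols Z a S" "card S = nw_rank Z a 0"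
    by (rule nw_rank_witness)
  then show ?thesis by simp
qed

lemma nw_rank_0_rows: "nw_rank Z 0 b = 0"
proof -
  obtain S where S: "S \<subseteq> {..<b}" "indep_cols Z 0 S" "card S = nw_rank Z 0 b"
    by (rule nw_rank_witness)
  have "S = {}" using S(2) unfolding indep_cols_def by (auto dest: spec[of _ "\<lambda>_. 1"])
  then show ?thesis using S(3) by simp
qed

lemma nw_rank_cong:
  assumes "\<forall>p<a. \<forall>j<b. A $$ (p, j) = Z $$ (p, j)"
  shows "nw_rank A a b = nw_rank Z a b"
proof -
  have "indep_cols A a S = indep_cols Z a S" if "S \<subseteq> {..<b}" for S
  proof -
    have "(\<Sum>j\<in>S. c j * A $$ (p, j)) = (\<Sum>j\<in>S. c j * Z $$ (p, j))" if "p < a" for c p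
      by (rule sum.cong) (use assms \<open>S \<subseteq> {..<b}\<close> that in auto)
    then show ?thesis unfolding indep_cols_def by simp
  qed
  then have "{S. S \<subseteq> {..<b} \<and> indep_cols A a S} = {S. S \<subseteq> {..<b} \<and> indep_cols Z a S}" by blast
  then show ?thesis unfolding nw_rank_def by simp
qed

lemma sum_extend_zero:
  fixes Z :: "'a::field mat"
  shows "finite T \<Longrightarrow> S \<subseteq> T \<Longrightarrow>
    (\<Sum>j\<in>T. (if j \<in> S then c j else 0) * Z $$ (p, j)) = (\<Sum>j\<in>S. c j * Z $$ (p, j))"
  by (subst sum.mono_neutral_right[of T S]) auto

lemma indep_cols_subset:
  assumes "finite T" "indep_cols Z a T" "S \<subseteq> T"
  shows "indep_cols Z a S"
  unfolding indep_cols_def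
proof (intro allI impI ballI)
  fix c j assume h: "\<forall>p<a. (\<Sum>j\<in>S. c j * Z $$ (p, j)) = 0" and j: "j \<in> S"
  define c' where "c' j = (if j \<in> S then c j else 0)" for j
  have "\<forall>p<a. (\<Sum>j\<in>T. c' j * Z $$ (p, j)) = 0"
    using h sum_extend_zero[OF assms(1,3), of c Z] by (simp add: c'_def)
  then have "c' j = 0" using assms(2,3) j unfolding indep_cols_def by blast
  then show "c j = 0" using j by (simp add: c'_def)
qed

lemma in_col_span_mono:
  assumes "in_col_span Z a k S" "S \<subseteq> T" "finite T"
  shows "in_col_span Z a k T"
proof -
  obtain c where c: "\<forall>p<a. Z $$ (p, k) = (\<Sum>j\<in>S. c j * Z $$ (p, j))"
    using assms(1) unfolding in_col_span_def by blast
  have "Z $$ (p, k) = (\<Sum>j\<in>T. (if j \<in> S then c j else 0) * Z $$ (p, j))" if "p < a" for p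
    using c that sum_extend_zero[OF assms(3,2), of c Z p] by simp
  then show ?thesis unfolding in_col_span_def by (intro exI[of _ "\<lambda>j. if j \<in> S then c j else 0"]) simp
qed

lemma in_col_span_self:
  assumes "k \<in> S" "finite S"
  shows "in_col_span Z a k S"
proof -
  have "Z $$ (p, k) = (\<Sum>j\<in>S. (if j = k then 1 else 0) * Z $$ (p, j))" for p
    using assms by (simp add: if_distrib[of "\<lambda>x. x * _"] cong: if_cong)
  then show ?thesis unfolding in_col_span_def by (intro exI[of _ "\<lambda>j. if j = k then 1 else 0"]) simp
qed

lemma in_col_span_trans:
  assumes "finite S" "\<forall>j\<in>S. in_col_span Z a j T" "in_col_span Z a k S"
  shows "in_col_span Z a k T"
proof -
  obtain e where e: "\<forall>j\<in>S. \<forall>p<a. Z $$ (p, j) = (\<Sum>l\<in>T. e j l * Z $$ (p, l))"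
    using bchoice[OF assms(2)[unfolded in_col_span_def]] by blast
  obtain c where c: "\<forall>p<a. Z $$ (p, k) = (\<Sum>j\<in>S. c j * Z $$ (p, j))"
    using assms(3) unfolding in_col_span_def by blast
  have "Z $$ (p, k) = (\<Sum>l\<in>T. (\<Sum>j\<in>S. c j * e j l) * Z $$ (p, l))" if p: "p < a" for p
  proof -
    have "Z $$ (p, k) = (\<Sum>j\<in>S. c j * Z $$ (p, j))" using c p by blast
    also have "\<dots> = (\<Sum>j\<in>S. c j * (\<Sum>l\<in>T. e j l * Z $$ (p, l)))"
    proof (rule sum.cong[OF refl])
      fix j assume "j \<in> S"
      then show "c j * Z $$ (p, j) = c j * (\<Sum>l\<in>T. e j l * Z $$ (p, l))"
        by (simp only: e[rule_format, OF \<open>j \<in> S\<close> p])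
    qed
    also have "\<dots> = (\<Sum>l\<in>T. (\<Sum>j\<in>S. c j * e j l) * Z $$ (p, l))"
      by (simp add: sum_distrib_left sum_distrib_right mult.assoc sum.swap[of _ S])
    finally show ?thesis .
  qed
  then show ?thesis unfolding in_col_span_def by (intro exI[of _ "\<lambda>l. \<Sum>j\<in>S. c j * e j l"]) simp
qed

lemma indep_cols_insert_iff:
  assumes S: "finite S" "k \<notin> S" "indep_cols Z a S"
  shows "indep_cols Z a (insert k S) \<longleftrightarrow> \<not> in_col_span Z a k S"
proof
  assume ind: "indep_cols Z a (insert k S)"
  show "\<not> in_col_span Z a k S"
  proof
    assume "in_col_span Z a k S"
    then obtain c where c: "\<forall>p<a. Z $$ (p, k) = (\<Sum>j\<in>S. c j * Z $$ (p, j))"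
      unfolding in_col_span_def by blast
    have "(\<Sum>j\<in>S. (c(k := -1)) j * Z $$ (p, j)) = (\<Sum>j\<in>S. c j * Z $$ (p, j))" for p
      using S(2) by (intro sum.cong) auto
    then have "\<forall>p<a. (\<Sum>j\<in>insert k S. (c(k := -1)) j * Z $$ (p, j)) = 0"
      using S c by simp
    then have "(c(k := -1)) k = 0"
      using ind[unfolded indep_cols_def, rule_format, of "c(k := -1)" k] by simp
    then show False by simp
  qed
next
  assume nsp: "\<not> in_col_span Z a k S"
  show "indep_cols Z a (insert k S)" unfolding indep_cols_def
  proof (intro allI impI ballI)
    fix c j assume c: "\<forall>p<a. (\<Sum>j\<in>insert k S. c j * Z $$ (p, j)) = 0" and j: "j \<in> insert k S"
    have c': "\<forall>p<a. c k * Z $$ (p, k) + (\<Sum>j\<in>S. c j * Z $$ (p, j)) = 0" using c S(1,2) by simp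
    have ck: "c k = 0"
    proof (rule ccontr)
      assume ck: "c k \<noteq> 0"
      have "\<forall>p<a. Z $$ (p, k) = (\<Sum>j\<in>S. (- c j / c k) * Z $$ (p, j))"
      proof (intro allI impI)
        fix p assume "p < a"
        then have "c k * Z $$ (p, k) = - (\<Sum>j\<in>S. c j * Z $$ (p, j))"
          using c' by (simp add: eq_neg_iff_add_eq_0)
        then have "Z $$ (p, k) = - (\<Sum>j\<in>S. c j * Z $$ (p, j)) / c k"
          using ck by (simp add: field_simps)
        also have "\<dots> = (\<Sum>j\<in>S. (- c j / c k) * Z $$ (p, j))"
          by (simp add: sum_divide_distrib sum_negf)
        finally show "Z $$ (p, k) = (\<Sum>j\<in>S. (- c j / c k) * Z $$ (p, j))" .
      qed
      then have "in_col_span Z a k S" unfolding in_col_span_def by (rule exI[of _ "\<lambda>j. - c j / c k"])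
      then show False using nsp by contradiction
    qed
    then have "\<forall>p<a. (\<Sum>j\<in>S. c j * Z $$ (p, j)) = 0" using c' by simp
    then have "\<forall>j\<in>S. c j = 0" using S(3) unfolding indep_cols_def by blast
    then show "c j = 0" using ck j by auto
  qed
qed

lemma nw_rank_le_Suc_col: "nw_rank Z a b \<le> nw_rank Z a (Suc b)"
proof -
  obtain S where "S \<subseteq> {..<b}" "indep_cols Z a S" "card S = nw_rank Z a b"
    by (rule nw_rank_witness)
  moreover have "S \<subseteq> {..<Suc b}" using \<open>S \<subseteq> {..<b}\<close> by auto
  ultimately show ?thesis using card_le_nw_rank[of S "Suc b" Z a] by simp
qed

lemma nw_rank_Suc_col_le: "nw_rank Z a (Suc b) \<le> Suc (nw_rank Z a b)"
proof -
  obtain T where T: "T \<subseteq> {..<Suc b}" "indep_cols Z a T" "card T = nw_rank Z a (Suc b)"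
    by (rule nw_rank_witness)
  have fT: "finite T" using T(1) finite_subset by blast
  have "card (T - {b}) \<le> nw_rank Z a b"
    using T(1) indep_cols_subset[OF fT T(2)] by (intro card_le_nw_rank) auto
  moreover have "card T \<le> Suc (card (T - {b}))"
    using fT by (cases "b \<in> T") (simp_all add: card_Suc_Diff1)
  ultimately show ?thesis using T(3) by simp
qed

lemma nw_rank_Suc_col_cases:
  "nw_rank Z a (Suc b) = nw_rank Z a b \<or> nw_rank Z a (Suc b) = Suc (nw_rank Z a b)"
  using nw_rank_le_Suc_col[of Z a b] nw_rank_Suc_col_le[of Z a b] by linarith

text \<open>Subtracting a multiple of \<open>c0\<close> cancels the value at row \<open>a\<close> of a dependency of
  \<open>S - {k}\<close> on the first \<open>a\<close> rows; the result is a dependency of \<open>S\<close> on \<open>Suc a\<close> rows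
  that is nonzero at \<open>k\<close>.\<close>
lemma indep_cols_remove_dependent:
  assumes fin: "finite S" and ind: "indep_cols Z (Suc a) S" and k: "k \<in> S"
    and dep: "\<forall>p<a. (\<Sum>j\<in>S. c0 j * Z $$ (p, j)) = 0" "c0 k \<noteq> 0"
  shows "indep_cols Z a (S - {k})"
  unfolding indep_cols_def
proof (intro allI impI ballI, rule ccontr)
  fix c l assume c: "\<forall>p<a. (\<Sum>j\<in>S - {k}. c j * Z $$ (p, j)) = 0" and l: "l \<in> S - {k}" "c l \<noteq> 0"
  define c' where "c' = c(k := 0)"
  have c'_sum: "(\<Sum>j\<in>S. c' j * Z $$ (p, j)) = (\<Sum>j\<in>S - {k}. c j * Z $$ (p, j))" for p
  proof -
    have "(\<Sum>j\<in>S. c' j * Z $$ (p, j)) = (\<Sum>j\<in>S - {k}. c' j * Z $$ (p, j))"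
      using sum.remove[OF fin k, of "\<lambda>j. c' j * Z $$ (p, j)"] by (simp add: c'_def)
    also have "\<dots> = (\<Sum>j\<in>S - {k}. c j * Z $$ (p, j))"
      by (rule sum.cong) (auto simp: c'_def)
    finally show ?thesis .
  qed
  define s where "s = (\<Sum>j\<in>S - {k}. c j * Z $$ (a, j))"
  define s0 where "s0 = (\<Sum>j\<in>S. c0 j * Z $$ (a, j))"
  show False
  proof (cases "s = 0")
    case True
    then have "\<forall>p<Suc a. (\<Sum>j\<in>S. c' j * Z $$ (p, j)) = 0"
      using c c'_sum by (auto simp: s_def less_Suc_eq)
    then have "c' l = 0" using ind l(1) unfolding indep_cols_def by blast
    then show False using l by (simp add: c'_def)
  next
    case False
    define e where "e j = c0 j - (s0 / s) * c' j" for j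
    have e_sum: "(\<Sum>j\<in>S. e j * Z $$ (p, j)) =
        (\<Sum>j\<in>S. c0 j * Z $$ (p, j)) - (s0 / s) * (\<Sum>j\<in>S. c' j * Z $$ (p, j))" for p
      unfolding e_def by (simp add: algebra_simps sum_subtractf sum_distrib_left)
    have "\<forall>p<Suc a. (\<Sum>j\<in>S. e j * Z $$ (p, j)) = 0"
      using e_sum dep(1) c c'_sum False by (auto simp: less_Suc_eq s_def s0_def)
    then have "e k = 0" using ind k unfolding indep_cols_def by blast
    then show False using dep(2) by (simp add: e_def c'_def)
  qed
qed

lemma nw_rank_Suc_row_le: "nw_rank Z (Suc a) b \<le> Suc (nw_rank Z a b)"
proof -
  obtain S where S: "S \<subseteq> {..<b}" "indep_cols Z (Suc a) S" "card S = nw_rank Z (Suc a) b"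
    by (rule nw_rank_witness)
  have fS: "finite S" using S(1) finite_subset by blast
  show ?thesis
  proof (cases "indep_cols Z a S")
    case True
    then show ?thesis using card_le_nw_rank[OF S(1)] S(3) by fastforce
  next
    case False
    then obtain c0 k where "\<forall>p<a. (\<Sum>j\<in>S. c0 j * Z $$ (p, j)) = 0" "k \<in> S" "c0 k \<noteq> 0"
      unfolding indep_cols_def by blast
    with indep_cols_remove_dependent[OF fS S(2)] have "indep_cols Z a (S - {k})" by blast
    then have "card (S - {k}) \<le> nw_rank Z a b" using S(1) by (intro card_le_nw_rank) auto
    then show ?thesis using S(3) card_Suc_Diff1[OF fS \<open>k \<in> S\<close>] by simp
  qed
qed

lemma indep_cols_exchange:
  assumes span: "in_col_span Z a b {..<b}" and T: "T \<subseteq> {..<b}" "indep_cols Z a (insert b T)"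
  shows "\<exists>j<b. j \<notin> T \<and> indep_cols Z a (insert j T)"
proof -
  have fT: "finite T" using T(1) finite_subset by blast
  have bT: "b \<notin> T" using T(1) by auto
  have indT: "indep_cols Z a T" using indep_cols_subset[OF _ T(2)] fT by blast
  have nsp: "\<not> in_col_span Z a b T" using indep_cols_insert_iff[OF fT bT indT] T(2) by simp
  have "\<exists>j<b. j \<notin> T \<and> \<not> in_col_span Z a j T"
  proof (rule ccontr)
    assume "\<not> ?thesis"
    then have "\<forall>j\<in>{..<b}. in_col_span Z a j T" using in_col_span_self[OF _ fT] by blast
    then show False using in_col_span_trans[OF _ _ span] nsp by blast
  qed
  then show ?thesis using indep_cols_insert_iff[OF fT _ indT] by blast
qed

lemma nw_rank_Suc_col_eq_iff: "nw_rank Z a (Suc b) = nw_rank Z a b \<longleftrightarrow> in_col_span Z a b {..<b}"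
proof
  assume eq: "nw_rank Z a (Suc b) = nw_rank Z a b"
  show "in_col_span Z a b {..<b}"
  proof (rule ccontr)
    assume nsp: "\<not> in_col_span Z a b {..<b}"
    obtain S where S: "S \<subseteq> {..<b}" "indep_cols Z a S" "card S = nw_rank Z a b"
      by (rule nw_rank_witness)
    have fS: "finite S" using S(1) finite_subset by blast
    have "\<not> in_col_span Z a b S" using nsp in_col_span_mono[OF _ S(1)] by auto
    then have "indep_cols Z a (insert b S)" using indep_cols_insert_iff[OF fS _ S(2)] S(1) by auto
    then have "card (insert b S) \<le> nw_rank Z a (Suc b)" using S(1) by (intro card_le_nw_rank) auto
    moreover have "b \<notin> S" using S(1) by auto
    ultimately show False using eq S(3) fS by simp
  qed
next
  assume span: "in_col_span Z a b {..<b}"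
  obtain T where T: "T \<subseteq> {..<Suc b}" "indep_cols Z a T" "card T = nw_rank Z a (Suc b)"
    by (rule nw_rank_witness)
  have fT: "finite T" using T(1) finite_subset by blast
  have "nw_rank Z a (Suc b) \<le> nw_rank Z a b"
  proof (cases "b \<in> T")
    case False
    then have "T \<subseteq> {..<b}" using T(1) by (auto simp: less_Suc_eq)
    then show ?thesis using card_le_nw_rank T(2,3) by metis
  next
    case True
    have T': "T - {b} \<subseteq> {..<b}" "insert b (T - {b}) = T" using T(1) True by auto
    then obtain j where "j < b" "j \<notin> T - {b}" "indep_cols Z a (insert j (T - {b}))"
      using indep_cols_exchange[OF span T'(1)] T(2) by metis
    moreover have "card (insert j (T - {b})) = card T"
    proof -
      have "card (insert j (T - {b})) = Suc (card (T - {b}))"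
        using \<open>j \<notin> T - {b}\<close> fT by simp
      also have "\<dots> = card T" using card_Suc_Diff1[OF fT True] .
      finally show ?thesis .
    qed
    ultimately show ?thesis using card_le_nw_rank[of "insert j (T - {b})" b Z a] T'(1) T(3) by simp
  qed
  then show "nw_rank Z a (Suc b) = nw_rank Z a b" using nw_rank_le_Suc_col[of Z a b] by simp
qed

lemma nw_rank_col_step_persists:
  assumes "nw_rank Z a (Suc b) \<noteq> nw_rank Z a b" "a \<le> a'"
  shows "nw_rank Z a' (Suc b) \<noteq> nw_rank Z a' b"
proof -
  have "in_col_span Z a b {..<b}" if "in_col_span Z a' b {..<b}"
    using that assms(2) unfolding in_col_span_def by auto
  then show ?thesis using assms(1) nw_rank_Suc_col_eq_iff by blast
qed

lemma nw_rank_le_cols: "nw_rank Z a b \<le> b"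
proof -
  obtain S where "S \<subseteq> {..<b}" "indep_cols Z a S" "card S = nw_rank Z a b"
    by (rule nw_rank_witness)
  then show ?thesis using card_mono[of "{..<b}" S] by simp
qed

locale nonsingular =
  fixes Z :: "'a::field mat" and d :: nat
  assumes indep_cols_all: "indep_cols Z d {..<d}"
begin

lemma nw_rank_all_rows: "b \<le> d \<Longrightarrow> nw_rank Z d b = b"
  using card_le_nw_rank[of "{..<b}" b Z d] indep_cols_subset[OF _ indep_cols_all, of "{..<b}"]
    nw_rank_le_cols[of Z d b] by simp

text \<open>Row \<open>pivot_row b\<close> (counted from 0) is the one at which column \<open>b\<close> leaves the span of
  the earlier columns.\<close>
definition pivot_row :: "nat \<Rightarrow> nat" where
  "pivot_row b = (LEAST a. nw_rank Z (Suc a) (Suc b) \<noteq> nw_rank Z (Suc a) b)"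

lemma
  assumes b: "b < d"
  shows pivot_row_less: "pivot_row b < d"
    and nw_rank_col_step_iff: "nw_rank Z a (Suc b) \<noteq> nw_rank Z a b \<longleftrightarrow> pivot_row b < a"
proof -
  have ex: "nw_rank Z (Suc (d - 1)) (Suc b) \<noteq> nw_rank Z (Suc (d - 1)) b"
    using nw_rank_all_rows b by simp
  let ?P = "\<lambda>a. nw_rank Z (Suc a) (Suc b) \<noteq> nw_rank Z (Suc a) b"
  have step: "nw_rank Z (Suc (pivot_row b)) (Suc b) \<noteq> nw_rank Z (Suc (pivot_row b)) b"
    unfolding pivot_row_def by (rule LeastI[of ?P, OF ex])
  have "pivot_row b \<le> d - 1" unfolding pivot_row_def by (rule Least_le[of ?P, OF ex])
  then show "pivot_row b < d" using b by simp
  show "nw_rank Z a (Suc b) \<noteq> nw_rank Z a b \<longleftrightarrow> pivot_row b < a"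
  proof
    assume ne: "nw_rank Z a (Suc b) \<noteq> nw_rank Z a b"
    show "pivot_row b < a"
    proof (cases a)
      case 0
      then show ?thesis using ne nw_rank_0_rows[of Z] by simp
    next
      case (Suc a')
      have "\<not> a' < pivot_row b"
        using ne not_less_Least[of a' ?P] unfolding pivot_row_def Suc by blast
      then show ?thesis using Suc by simp
    qed
  next
    assume "pivot_row b < a"
    then show "nw_rank Z a (Suc b) \<noteq> nw_rank Z a b" using nw_rank_col_step_persists[OF step] by simp
  qed
qed

lemma nw_rank_eq_card_pivots: "b \<le> d \<Longrightarrow> nw_rank Z a b = card {q. q < b \<and> pivot_row q < a}"
proof (induction b)
  case 0
  then show ?case using nw_rank_0_cols by simp
next
  case (Suc b)
  then have b: "b < d" and IH: "nw_rank Z a b = card {q. q < b \<and> pivot_row q < a}" by simp_all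
  show ?case
  proof (cases "pivot_row b < a")
    case True
    then have "nw_rank Z a (Suc b) = Suc (nw_rank Z a b)"
      using nw_rank_col_step_iff[OF b, of a] nw_rank_Suc_col_cases[of Z a b] by auto
    moreover have "{q. q < Suc b \<and> pivot_row q < a} = insert b {q. q < b \<and> pivot_row q < a}"
      using True by auto
    ultimately show ?thesis using IH by simp
  next
    case False
    then have "nw_rank Z a (Suc b) = nw_rank Z a b" using nw_rank_col_step_iff[OF b, of a] by auto
    moreover have "{q. q < Suc b \<and> pivot_row q < a} = {q. q < b \<and> pivot_row q < a}"
      using False less_Suc_eq by auto
    ultimately show ?thesis using IH by simp
  qed
qed

text \<open>Two columns with the same pivot row would raise the rank by two when that row is added.\<close>
lemma inj_on_pivot_row: "inj_on pivot_row {..<d}"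
proof (rule inj_onI, rule ccontr)
  fix b1 b2 assume b: "b1 \<in> {..<d}" "b2 \<in> {..<d}" and eq: "pivot_row b1 = pivot_row b2"
    and ne: "b1 \<noteq> b2"
  define r where "r = pivot_row b1"
  define Q where "Q = {q. q < d \<and> pivot_row q < r}"
  have "insert b1 (insert b2 Q) \<subseteq> {q. q < d \<and> pivot_row q < Suc r}"
    using b eq by (auto simp: r_def Q_def)
  then have "card (insert b1 (insert b2 Q)) \<le> card {q. q < d \<and> pivot_row q < Suc r}"
    by (intro card_mono) simp_all
  also have "\<dots> = nw_rank Z (Suc r) d" using nw_rank_eq_card_pivots[of d "Suc r"] by simp
  finally have "card (insert b1 (insert b2 Q)) \<le> nw_rank Z (Suc r) d" .
  moreover have "card (insert b1 (insert b2 Q)) = Suc (Suc (nw_rank Z r d))"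
    using ne eq nw_rank_eq_card_pivots[of d r] by (simp add: r_def Q_def)
  ultimately show False using nw_rank_Suc_row_le[of Z r d] by simp
qed

definition pivot_perm :: "nat \<Rightarrow> nat" where
  "pivot_perm q = (if q < d then pivot_row q else q)"

lemma pivot_perm_permutes: "pivot_perm permutes {..<d}"
proof (rule bij_imp_permutes)
  have inj: "inj_on pivot_perm {..<d}"
    using inj_on_pivot_row by (simp add: pivot_perm_def inj_on_def)
  moreover have "pivot_perm ` {..<d} \<subseteq> {..<d}" using pivot_row_less by (auto simp: pivot_perm_def)
  ultimately have "pivot_perm ` {..<d} = {..<d}" using endo_inj_surj by blast
  then show "bij_betw pivot_perm {..<d} {..<d}" using inj by (simp add: bij_betw_def)
  show "\<And>x. x \<notin> {..<d} \<Longrightarrow> pivot_perm x = x" by (simp add: pivot_perm_def)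
qed

theorem nw_rank_eq_perm_count:
  "\<exists>\<sigma>. \<sigma> permutes {..<d} \<and> (\<forall>a\<le>d. \<forall>b\<le>d. nw_rank Z a b = card {p. p < a \<and> \<sigma> p < b})"
proof (intro exI conjI allI impI)
  let ?\<sigma> = "inv_into UNIV pivot_perm"
  show "?\<sigma> permutes {..<d}" using permutes_inv[OF pivot_perm_permutes] .
  fix a b assume a: "a \<le> d" and b: "b \<le> d"
  have "pivot_perm ` {q. q < b \<and> pivot_row q < a} = {p. p < a \<and> ?\<sigma> p < b}"
  proof (intro equalityI subsetI)
    fix p assume "p \<in> pivot_perm ` {q. q < b \<and> pivot_row q < a}"
    then obtain q where q: "q < b" "pivot_row q < a" "p = pivot_perm q" by auto
    then have "?\<sigma> p = q" using permutes_inverses(2)[OF pivot_perm_permutes] by simp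
    then show "p \<in> {p. p < a \<and> ?\<sigma> p < b}" using q b by (auto simp: pivot_perm_def)
  next
    fix p assume p: "p \<in> {p. p < a \<and> ?\<sigma> p < b}"
    have inv: "pivot_perm (?\<sigma> p) = p" using permutes_inverses(1)[OF pivot_perm_permutes] by simp
    then have "pivot_row (?\<sigma> p) = p" using p b by (simp add: pivot_perm_def)
    then show "p \<in> pivot_perm ` {q. q < b \<and> pivot_row q < a}"
      using p by (intro image_eqI[of p pivot_perm "?\<sigma> p", OF inv[symmetric]]) simp
  qed
  moreover have "inj_on pivot_perm {q. q < b \<and> pivot_row q < a}"
    by (rule permutes_inj_on[OF pivot_perm_permutes])
  ultimately have "card {p. p < a \<and> ?\<sigma> p < b} = card {q. q < b \<and> pivot_row q < a}"
    using card_image by fastforce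
  then show "nw_rank Z a b = card {p. p < a \<and> ?\<sigma> p < b}" using nw_rank_eq_card_pivots[OF b] by simp
qed

end

lemma indep_cols_inj_on_col:
  assumes A: "A \<in> carrier_mat a b" and S: "S \<subseteq> {..<b}" and ind: "indep_cols A a S"
  shows "inj_on (col A) S"
proof (rule inj_onI, rule ccontr)
  fix i j assume i: "i \<in> S" and j: "j \<in> S" and eq: "col A i = col A j" and ne: "i \<noteq> j"
  define c where "c k = (if k = i then 1 else if k = j then -1 else (0::'a))" for k
  have "i < b" "j < b" using i j S by auto
  then have "A $$ (p, i) = A $$ (p, j)" if "p < a" for p
    using arg_cong[OF eq, of "\<lambda>v. v $ p"] that A by auto
  then have "\<forall>p<a. (\<Sum>k\<in>S. c k * A $$ (p, k)) = 0"
    using i j ne S finite_subset[OF S] by (simp add: c_def if_distrib[of "\<lambda>x. x * _"] sum.If_cases)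
  then have "c i = 0" using ind i unfolding indep_cols_def by blast
  then show False by (simp add: c_def)
qed

context vec_space
begin

lemma lincomb_col_image_index:
  assumes A: "A \<in> carrier_mat n b" and S: "S \<subseteq> {..<b}" and inj: "inj_on (col A) S" and p: "p < n"
  shows "lincomb c (col A ` S) $ p = (\<Sum>j\<in>S. c (col A j) * A $$ (p, j))"
proof -
  have "col A ` S \<subseteq> carrier_vec n" using A by auto
  then have "lincomb c (col A ` S) $ p = (\<Sum>v\<in>col A ` S. c v * v $ p)"
    by (rule lincomb_index[OF p])
  also have "\<dots> = (\<Sum>j\<in>S. c (col A j) * col A j $ p)"
    by (rule sum.reindex[OF inj, unfolded comp_def])
  also have "\<dots> = (\<Sum>j\<in>S. c (col A j) * A $$ (p, j))"
    using A S p by (intro sum.cong) auto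
  finally show ?thesis .
qed

lemma indep_cols_iff_lin_indpt:
  assumes A: "A \<in> carrier_mat n b" and S: "S \<subseteq> {..<b}"
  shows "indep_cols A n S \<longleftrightarrow> inj_on (col A) S \<and> lin_indpt (col A ` S)"
proof -
  have fS: "finite (col A ` S)" using S finite_subset by blast
  have cols: "col A ` S \<subseteq> carrier_vec n" using A by auto
  show ?thesis
  proof
    assume ind: "indep_cols A n S"
    have inj: "inj_on (col A) S" by (rule indep_cols_inj_on_col[OF A S ind])
    have "lin_indpt (col A ` S)"
    proof (rule finite_lin_indpt2[OF fS cols])
      fix c assume lc: "lincomb c (col A ` S) = 0\<^sub>v n"
      have "(\<Sum>j\<in>S. (c \<circ> col A) j * A $$ (p, j)) = 0" if p: "p < n" for p
        using arg_cong[OF lc, of "\<lambda>v. v $ p"] lincomb_col_image_index[OF A S inj p] p by simp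
      then have "\<forall>j\<in>S. (c \<circ> col A) j = 0" using ind unfolding indep_cols_def by blast
      then show "\<forall>v\<in>col A ` S. c v = 0" by simp
    qed
    with inj show "inj_on (col A) S \<and> lin_indpt (col A ` S)" by simp
  next
    assume h: "inj_on (col A) S \<and> lin_indpt (col A ` S)"
    show "indep_cols A n S" unfolding indep_cols_def
    proof (intro allI impI ballI, rule ccontr)
      fix c j assume z: "\<forall>p<n. (\<Sum>j\<in>S. c j * A $$ (p, j)) = 0" and j: "j \<in> S" and cj: "c j \<noteq> 0"
      define c' where "c' v = c (inv_into S (col A) v)" for v
      have c': "c' (col A k) = c k" if "k \<in> S" for k using h that by (simp add: c'_def)
      have lc: "lincomb c' (col A ` S) = 0\<^sub>v n"
      proof (rule eq_vecI)
        show "dim_vec (lincomb c' (col A ` S)) = dim_vec (0\<^sub>v n)"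
          using lincomb_dim[OF fS cols] by simp
        fix p assume "p < dim_vec (0\<^sub>v n)"
        then have p: "p < n" by simp
        have "lincomb c' (col A ` S) $ p = (\<Sum>k\<in>S. c' (col A k) * A $$ (p, k))"
          using lincomb_col_image_index[OF A S _ p] h by blast
        also have "\<dots> = (\<Sum>k\<in>S. c k * A $$ (p, k))" using c' by (intro sum.cong) auto
        finally show "lincomb c' (col A ` S) $ p = 0\<^sub>v n $ p" using z p by simp
      qed
      have "lin_dep (col A ` S)"
        by (rule lin_dep_crit[where A="col A ` S" and S="col A ` S" and a=c' and v="col A j"])
          (use fS cols j c' cj lc in auto)
      then show False using h by simp
    qed
  qed
qed

lemma rank_eq_nw_rank:
  assumes A: "A \<in> carrier_mat n b"
  shows "rank A = nw_rank A n b"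
proof (rule antisym)
  have cols_A: "set (cols A) = col A ` {..<b}"
    using A unfolding cols_def by (simp add: atLeast0LessThan)
  obtain T where T: "finite T" "maximal T (\<lambda>T. T \<subseteq> set (cols A) \<and> lin_indpt T)"
    using maximal_exists_superset[of "set (cols A)" "\<lambda>T. T \<subseteq> set (cols A) \<and> lin_indpt T" "{}"]
    by (auto simp: lin_dep_def)
  then have T_sub: "T \<subseteq> col A ` {..<b}" and indpt: "lin_indpt T"
    using cols_A unfolding maximal_def by auto
  obtain U where U: "U \<subseteq> {..<b}" "inj_on (col A) U" "T = col A ` U"
    using subset_image_inj[THEN iffD1, OF T_sub] by blast
  have "rank A = card T" using rank_card_indpt[OF A T(2)] .
  also have "\<dots> = card U" using U card_image by blast
  also have "\<dots> \<le> nw_rank A n b"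
    using U indpt indep_cols_iff_lin_indpt[OF A U(1)] by (intro card_le_nw_rank) auto
  finally show "rank A \<le> nw_rank A n b" .
  obtain S where S: "S \<subseteq> {..<b}" "indep_cols A n S" "card S = nw_rank A n b"
    by (rule nw_rank_witness)
  then have h: "inj_on (col A) S" "lin_indpt (col A ` S)"
    using indep_cols_iff_lin_indpt[OF A S(1)] by auto
  have "card (col A ` S) \<le> rank A"
    using S(1) cols_A h by (intro rank_ge_card_indpt[OF A]) auto
  then show "nw_rank A n b \<le> rank A" using S(3) card_image[OF h(1)] by simp
qed

end

lemma mrank_nw_submatrix:
  fixes Z :: "'a::field mat"
  assumes a: "a \<le> dim_row Z" and b: "b \<le> dim_col Z"
  shows "mrank (submatrix Z {..<a} {..<b}) = nw_rank Z a b"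
proof -
  have pick_lessThan: "pick {..<k} i = i" if "i < k" for k i :: nat
  proof -
    have "{x\<in>{..<k}. x < i} = {..<i}" using that by auto
    then show ?thesis using pick_card_in_set[of i "{..<k}"] that by simp
  qed
  have rows: "{i. i < dim_row Z \<and> i \<in> {..<a}} = {..<a}" and cols: "{i. i < dim_col Z \<and> i \<in> {..<b}} = {..<b}"
    using a b by auto
  let ?A = "submatrix Z {..<a} {..<b}"
  have A: "?A \<in> carrier_mat a b" using dim_submatrix[of Z "{..<a}" "{..<b}"] rows cols by auto
  have "\<forall>p<a. \<forall>j<b. ?A $$ (p, j) = Z $$ (p, j)"
    using submatrix_index[of _ Z "{..<a}" _ "{..<b}"] rows cols pick_lessThan by simp
  then show ?thesis
    using vec_space.rank_eq_nw_rank[OF A] nw_rank_cong unfolding mrank_def by (metis carrier_matD(1)[OF A])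
qed

lemma nonsingular_four_block_identities:
  fixes M :: "'a::field mat"
  assumes M: "M \<in> carrier_mat y x"
  shows "nonsingular (four_block_mat M (1\<^sub>m y) (1\<^sub>m x) (0\<^sub>m x y)) (x + y)"
  unfolding nonsingular_def indep_cols_def
proof (intro allI impI ballI)
  fix c :: "nat \<Rightarrow> 'a" and j
  let ?Z = "four_block_mat M (1\<^sub>m y) (1\<^sub>m x) (0\<^sub>m x y)"
  assume h: "\<forall>p<x + y. (\<Sum>q\<in>{..<x + y}. c q * ?Z $$ (p, q)) = 0" and j: "j \<in> {..<x + y}"
  have ent: "?Z $$ (p, q) =
     (if p < y then (if q < x then M $$ (p, q) else (if p = q - x then 1 else 0))
      else (if q < x then (if p - y = q then 1 else 0) else 0))" if "p < x + y" "q < x + y" for p q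
    using M that by auto
  \<comment> \<open>The equation of row \<open>y + k\<close> involves only \<open>c k\<close>; then that of row \<open>k\<close> only \<open>c (x + k)\<close>.\<close>
  have c_low: "c k = 0" if k: "k < x" for k
  proof -
    have "(\<Sum>q\<in>{..<x + y}. c q * ?Z $$ (y + k, q)) = (\<Sum>q\<in>{..<x + y}. if q = k then c q else 0)"
      using k by (intro sum.cong) (auto simp: ent)
    then show "c k = 0" using h[rule_format, of "y + k"] k by (simp add: sum.delta)
  qed
  have c_high: "c (x + k) = 0" if k: "k < y" for k
  proof -
    have "(\<Sum>q\<in>{..<x + y}. c q * ?Z $$ (k, q)) = (\<Sum>q\<in>{..<x + y}. if q = x + k then c q else 0)"
      using k c_low by (intro sum.cong) (auto simp: ent)
    then show "c (x + k) = 0" using h[rule_format, of k] k by (simp add: sum.delta)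
  qed
  show "c j = 0"
  proof (cases "j < x")
    case False
    then show ?thesis using c_high[of "j - x"] j by simp
  qed (rule c_low)
qed

section \<open>The quiver setting\<close>

lemma dim_zeta [simp]:
  "dim_row (zeta n dx dy V) = dX n dx + dY n dy" "dim_col (zeta n dx dy V) = dX n dx + dY n dy"
  by (simp_all add: zeta_def M_Q_def)

lemma zeta_nonsingular: "nonsingular (zeta n dx dy V) (dX n dx + dY n dy)"
proof -
  have "M_Q n dx dy V \<in> carrier_mat (dY n dy) (dX n dx)" by (simp add: M_Q_def)
  then show ?thesis unfolding zeta_def by (rule nonsingular_four_block_identities)
qed

lemma roff_Suc: "1 \<le> k \<Longrightarrow> roff n dx dy (Suc k) = roff n dx dy k + rsz n dx dy k"
  unfolding roff_def by simp

lemma coff_Suc: "1 \<le> k \<Longrightarrow> coff n dx dy (Suc k) = coff n dx dy k + csz n dx dy k"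
  unfolding coff_def by simp

lemma rblock_eq_block: "1 \<le> k \<Longrightarrow> rblock n dx dy k = block (roff n dx dy) k"
  unfolding rblock_def block_def using roff_Suc by simp

lemma cblock_eq_block: "1 \<le> k \<Longrightarrow> cblock n dx dy k = block (coff n dx dy) k"
  unfolding cblock_def block_def using coff_Suc by simp

lemma roff_last: "roff n dx dy (Suc (2 * n + 1)) = dX n dx + dY n dy"
proof -
  have "roff n dx dy (Suc (2 * n + 1))
      = (\<Sum>k\<in>{1..<n+2}. rsz n dx dy k) + (\<Sum>k\<in>{n+2..<2*n+2}. rsz n dx dy k)"
    unfolding roff_def by (subst sum.atLeastLessThan_concat) auto
  also have "(\<Sum>k\<in>{1..<n+2}. rsz n dx dy k) = (\<Sum>i\<in>{0..n}. dy i)"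
    by (rule sum.reindex_bij_witness[of _ "\<lambda>i. i + 1" "\<lambda>k. k - 1"]) (auto simp: rsz_def)
  also have "(\<Sum>k\<in>{n+2..<2*n+2}. rsz n dx dy k) = (\<Sum>i\<in>{1..n}. dx i)"
    by (rule sum.reindex_bij_witness[of _ "\<lambda>i. 2*n+2-i" "\<lambda>k. 2*n+2-k"]) (auto simp: rsz_def)
  finally show ?thesis unfolding dX_def dY_def by simp
qed

lemma coff_last: "coff n dx dy (Suc (2 * n + 1)) = dX n dx + dY n dy"
proof -
  have "coff n dx dy (Suc (2 * n + 1))
      = (\<Sum>k\<in>{1..<n+1}. csz n dx dy k) + (\<Sum>k\<in>{n+1..<2*n+2}. csz n dx dy k)"
    unfolding coff_def by (subst sum.atLeastLessThan_concat) auto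
  also have "(\<Sum>k\<in>{1..<n+1}. csz n dx dy k) = (\<Sum>i\<in>{1..n}. dx i)"
    by (rule sum.reindex_bij_witness[of _ "\<lambda>i. n+1-i" "\<lambda>k. n+1-k"]) (auto simp: csz_def)
  also have "(\<Sum>k\<in>{n+1..<2*n+2}. csz n dx dy k) = (\<Sum>i\<in>{0..n}. dy i)"
    by (rule sum.reindex_bij_witness[of _ "\<lambda>i. i + n + 1" "\<lambda>k. k - n - 1"]) (auto simp: csz_def)
  finally show ?thesis unfolding dX_def dY_def by simp
qed

interpretation quiver_blocks: block_partition "dX n dx + dY n dy" "2 * n + 1" "roff n dx dy" "coff n dx dy"
  for n dx dy
proof
  show "mono (roff n dx dy)" "mono (coff n dx dy)"
    unfolding roff_def coff_def by (intro monoI sum_mono2; auto)+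
  show "roff n dx dy 1 = 0" "coff n dx dy 1 = 0" by (simp_all add: roff_def coff_def)
qed (simp_all only: roff_last coff_last)

lemma dim_perm_matrix [simp]:
  "dim_row (perm_matrix d \<sigma>) = d" "dim_col (perm_matrix d \<sigma>) = d"
  by (simp_all add: perm_matrix_def)

lemma rblock_less:
  "k \<in> {1..2 * n + 1} \<Longrightarrow> p \<in> rblock n dx dy k \<Longrightarrow> p < dX n dx + dY n dy"
  using quiver_blocks.row_block_less_d rblock_eq_block by auto

lemma cblock_less:
  "k \<in> {1..2 * n + 1} \<Longrightarrow> q \<in> cblock n dx dy k \<Longrightarrow> q < dX n dx + dY n dy"
  using quiver_blocks.col_block_less_d cblock_eq_block by auto

lemma nw_se_rows_perm_matrix:
  assumes perm: "\<sigma> permutes {..<dX n dx + dY n dy}"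
  shows "nw_se_rows n dx dy (perm_matrix (dX n dx + dY n dy) \<sigma> :: 'a::field mat)
     \<longleftrightarrow> quiver_blocks.perm_nw_se_rows n dx dy \<sigma>"
  unfolding nw_se_rows_def quiver_blocks.perm_nw_se_rows_def dim_perm_matrix
  apply (intro ball_cong refl iffI allI impI)
  subgoal premises prems for k p1 p2
  proof -
    have p: "p1 \<in> rblock n dx dy k" "p2 \<in> rblock n dx dy k"
      using prems(1,3,4) rblock_eq_block by auto
    then have "\<sigma> p1 < dX n dx + dY n dy" "\<sigma> p2 < dX n dx + dY n dy"
      using permutes_in_image[OF perm] rblock_less[OF prems(1)] by auto
    moreover from this have "perm_matrix (dX n dx + dY n dy) \<sigma> $$ (p1, \<sigma> p1) = (1::'a)"
      "perm_matrix (dX n dx + dY n dy) \<sigma> $$ (p2, \<sigma> p2) = (1::'a)"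
      using perm_matrix_eq_1_iff rblock_less[OF prems(1) p(1)] rblock_less[OF prems(1) p(2)] by blast+
    ultimately show ?thesis using prems(2,5) p by blast
  qed
  subgoal premises prems for k p1 q1 p2 q2
  proof -
    have "q1 = \<sigma> p1" "q2 = \<sigma> p2"
      using prems(3) perm_matrix_eq_1_iff[OF rblock_less[OF prems(1)], where 'a='a] by auto
    then show ?thesis using prems(1,2,3) rblock_eq_block[of k n dx dy] by auto
  qed
  done

lemma nw_se_cols_perm_matrix:
  assumes perm: "\<sigma> permutes {..<dX n dx + dY n dy}"
  shows "nw_se_cols n dx dy (perm_matrix (dX n dx + dY n dy) \<sigma> :: 'a::field mat)
     \<longleftrightarrow> quiver_blocks.perm_nw_se_cols n dx dy \<sigma>"
  unfolding nw_se_cols_def quiver_blocks.perm_nw_se_cols_def dim_perm_matrix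
  apply (intro ball_cong refl iffI allI impI)
  subgoal premises prems for k p1 p2
  proof -
    have q: "\<sigma> p1 \<in> cblock n dx dy k" "\<sigma> p2 \<in> cblock n dx dy k"
      using prems(1,5,6) cblock_eq_block by auto
    then have "perm_matrix (dX n dx + dY n dy) \<sigma> $$ (p1, \<sigma> p1) = (1::'a)"
      "perm_matrix (dX n dx + dY n dy) \<sigma> $$ (p2, \<sigma> p2) = (1::'a)"
      using perm_matrix_eq_1_iff prems(3,4) cblock_less[OF prems(1) q(1)] cblock_less[OF prems(1) q(2)]
      by blast+
    then show ?thesis using prems(2,3,4,7) q by blast
  qed
  subgoal premises prems for k p1 q1 p2 q2
  proof -
    have "q1 = \<sigma> p1" "q2 = \<sigma> p2"
      using prems(3) perm_matrix_eq_1_iff[OF _ cblock_less[OF prems(1)], where 'a='a] by auto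
    then show ?thesis using prems(1,2,3) cblock_eq_block[of k n dx dy] by auto
  qed
  done

lemma ones_in_block_perm_matrix:
  assumes "i \<in> {1..2 * n + 1}" "j \<in> {1..2 * n + 1}"
  shows "ones_in_block n dx dy (perm_matrix (dX n dx + dY n dy) \<sigma> :: 'a::field mat) i j
       = quiver_blocks.block_count n dx dy \<sigma> i j"
  using quiver_blocks.card_perm_matrix_block[OF assms, where 'a='a] assms
  unfolding ones_in_block_def by (simp add: rblock_eq_block cblock_eq_block)

theorem ex1_nw_se_perm_mat:
  assumes perm: "\<sigma> permutes {..<dX n dx + dY n dy}"
  shows "\<exists>!P :: 'a::field mat. perm_mat (dX n dx + dY n dy) P \<and>
     (\<forall>i\<in>{1..2*n+1}. \<forall>j\<in>{1..2*n+1}.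
        ones_in_block n dx dy P i j = quiver_blocks.block_count n dx dy \<sigma> i j) \<and>
     nw_se_rows n dx dy P \<and> nw_se_cols n dx dy P"
proof -
  let ?d = "dX n dx + dY n dy"
  let ?nw_se = "\<lambda>\<tau>. \<tau> permutes {..<?d} \<and> quiver_blocks.perm_nw_se_rows n dx dy \<tau> \<and>
    quiver_blocks.perm_nw_se_cols n dx dy \<tau> \<and>
    (\<forall>i\<in>{1..2*n+1}. \<forall>j\<in>{1..2*n+1}.
       quiver_blocks.block_count n dx dy \<tau> i j = quiver_blocks.block_count n dx dy \<sigma> i j)"
  obtain \<tau> where \<tau>: "?nw_se \<tau>" and unique: "\<And>\<tau>'. ?nw_se \<tau>' \<Longrightarrow> \<tau>' = \<tau>"
    using quiver_blocks.ex1_nw_se_perm[OF perm] by blast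
  have matrix_iff: "(perm_mat ?d P \<and>
      (\<forall>i\<in>{1..2*n+1}. \<forall>j\<in>{1..2*n+1}.
        ones_in_block n dx dy P i j = quiver_blocks.block_count n dx dy \<sigma> i j) \<and>
      nw_se_rows n dx dy P \<and> nw_se_cols n dx dy P)
    \<longleftrightarrow> (\<exists>\<rho>. ?nw_se \<rho> \<and> P = perm_matrix ?d \<rho>)" (is "?L \<longleftrightarrow> ?R") for P :: "'a mat"
  proof
    assume L: ?L
    then obtain \<rho> where \<rho>: "\<rho> permutes {..<?d}" "P = perm_matrix ?d \<rho>"
      unfolding perm_mat_iff_perm_matrix by blast
    have "quiver_blocks.block_count n dx dy \<rho> i j = quiver_blocks.block_count n dx dy \<sigma> i j"
      if "i \<in> {1..2*n+1}" "j \<in> {1..2*n+1}" for i j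
    proof -
      have "ones_in_block n dx dy P i j = quiver_blocks.block_count n dx dy \<sigma> i j" using L that by blast
      then show ?thesis using ones_in_block_perm_matrix[OF that, of dx dy \<rho>, where 'a='a] \<rho>(2) by simp
    qed
    moreover have "quiver_blocks.perm_nw_se_rows n dx dy \<rho>" "quiver_blocks.perm_nw_se_cols n dx dy \<rho>"
      using L nw_se_rows_perm_matrix[OF \<rho>(1), where 'a='a] nw_se_cols_perm_matrix[OF \<rho>(1), where 'a='a]
      unfolding \<rho>(2) by simp_all
    ultimately show ?R using \<rho> by blast
  next
    assume ?R
    then obtain \<rho> where \<rho>: "?nw_se \<rho>" "P = perm_matrix ?d \<rho>" by blast
    then show ?L
      using ones_in_block_perm_matrix[where \<sigma>=\<rho> and 'a='a]
        nw_se_rows_perm_matrix[of \<rho>, where 'a='a] nw_se_cols_perm_matrix[of \<rho>, where 'a='a]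
      unfolding perm_mat_iff_perm_matrix by auto
  qed
  show ?thesis
    unfolding matrix_iff using \<tau> unique by blast
qed

definition rank_array_rep :: "'a::field itself \<Rightarrow> nat \<Rightarrow> (nat \<Rightarrow> nat) \<Rightarrow> (nat \<Rightarrow> nat) \<Rightarrow>
    (nat \<times> nat \<Rightarrow> nat) \<Rightarrow> (nat \<Rightarrow> 'a mat) \<times> (nat \<Rightarrow> 'a mat)" where
  "rank_array_rep TYPE('a) n dx dy r = (SOME V. V \<in> orbit_r n dx dy r)"

lemma brank_eq_nw_rank:
  assumes i: "i \<le> 2 * n + 1" and j: "j \<le> 2 * n + 1"
  shows "brank TYPE('a::field) n dx dy r i j
       = nw_rank (zeta n dx dy (rank_array_rep TYPE('a) n dx dy r)) (roff n dx dy (Suc i)) (coff n dx dy (Suc j))"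
proof (cases "i = 0 \<or> j = 0")
  case True
  then show ?thesis
    using quiver_blocks.R_1 quiver_blocks.C_1 nw_rank_0_rows[where 'a='a] nw_rank_0_cols[where 'a='a]
    by (auto simp: brank_def)
next
  case False
  let ?Z = "zeta n dx dy (rank_array_rep TYPE('a) n dx dy r)"
  have "roff n dx dy (Suc i) \<le> dim_row ?Z" "coff n dx dy (Suc j) \<le> dim_col ?Z"
    using quiver_blocks.R_le_d[of "Suc i"] quiver_blocks.C_le_d[of "Suc j"] i j by simp_all
  from mrank_nw_submatrix[OF this] show ?thesis
    using False i j unfolding brank_def Zsub_def rank_array_rep_def by auto
qed

lemma block_count_eq_brank_alternating_sum:
  assumes rank_count: "\<forall>a\<le>dX n dx + dY n dy. \<forall>b\<le>dX n dx + dY n dy.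
      nw_rank (zeta n dx dy (rank_array_rep TYPE('a::field) n dx dy r)) a b = card {p. p < a \<and> \<sigma> p < b}"
    and i: "i \<in> {1..2*n+1}" and j: "j \<in> {1..2*n+1}"
  shows "int (quiver_blocks.block_count n dx dy \<sigma> i j) =
          int (brank TYPE('a) n dx dy r i j) + int (brank TYPE('a) n dx dy r (i - 1) (j - 1))
          - int (brank TYPE('a) n dx dy r i (j - 1)) - int (brank TYPE('a) n dx dy r (i - 1) j)"
proof -
  let ?R = "roff n dx dy" and ?C = "coff n dx dy"
  have brank_count: "brank TYPE('a) n dx dy r i' j' = card {p. p < ?R (Suc i') \<and> \<sigma> p < ?C (Suc j')}"
    if "i' \<le> 2 * n + 1" "j' \<le> 2 * n + 1" for i' j'
    using brank_eq_nw_rank[OF that, where 'a='a] rank_count quiver_blocks.R_le_d[of "Suc i'"]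
      quiver_blocks.C_le_d[of "Suc j'"] that by simp
  have "?R i \<le> ?R (Suc i)" "?C j \<le> ?C (Suc j)"
    using quiver_blocks.mono_R quiver_blocks.mono_C by (simp_all add: monoD)
  moreover have "Suc (i - 1) = i" "Suc (j - 1) = j" "i - 1 \<le> 2 * n + 1" "j - 1 \<le> 2 * n + 1"
    "i \<le> 2 * n + 1" "j \<le> 2 * n + 1"
    using i j by auto
  ultimately show ?thesis
    using card_rectangle[of "?R i" "?R (Suc i)" "?C j" "?C (Suc j)" \<sigma>]
      brank_count[of i j] brank_count[of "i - 1" "j - 1"] brank_count[of i "j - 1"]
      brank_count[of "i - 1" j]
    unfolding quiver_blocks.block_count_rectangle by simp
qed

theorem proposition4p8:
  fixes n :: nat and dx dy :: "nat \<Rightarrow> nat" and r :: "nat \<times> nat \<Rightarrow> nat"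
  assumes "quiver_rank_array TYPE('a::field) n dx dy r"
  shows "\<exists>!P :: 'a mat.
     perm_mat (dX n dx + dY n dy) P \<and>
     (\<forall>i\<in>{1..2*n+1}. \<forall>j\<in>{1..2*n+1}.
        int (ones_in_block n dx dy P i j) =
          int (brank TYPE('a) n dx dy r i j) + int (brank TYPE('a) n dx dy r (i - 1) (j - 1))
          - int (brank TYPE('a) n dx dy r i (j - 1)) - int (brank TYPE('a) n dx dy r (i - 1) j)) \<and>
     nw_se_rows n dx dy P \<and>
     nw_se_cols n dx dy P"
proof -
  interpret nonsingular "zeta n dx dy (rank_array_rep TYPE('a) n dx dy r)" "dX n dx + dY n dy"
    by (rule zeta_nonsingular)
  obtain \<sigma> where \<sigma>: "\<sigma> permutes {..<dX n dx + dY n dy}"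
    and rank_count: "\<forall>a\<le>dX n dx + dY n dy. \<forall>b\<le>dX n dx + dY n dy.
      nw_rank (zeta n dx dy (rank_array_rep TYPE('a) n dx dy r)) a b = card {p. p < a \<and> \<sigma> p < b}"
    using nw_rank_eq_perm_count by blast
  have "(\<forall>i\<in>{1..2*n+1}. \<forall>j\<in>{1..2*n+1}.
        int (ones_in_block n dx dy P i j) =
          int (brank TYPE('a) n dx dy r i j) + int (brank TYPE('a) n dx dy r (i - 1) (j - 1))
          - int (brank TYPE('a) n dx dy r i (j - 1)) - int (brank TYPE('a) n dx dy r (i - 1) j))
      \<longleftrightarrow> (\<forall>i\<in>{1..2*n+1}. \<forall>j\<in>{1..2*n+1}.
        ones_in_block n dx dy P i j = quiver_blocks.block_count n dx dy \<sigma> i j)" for P :: "'a mat"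
    by (intro ball_cong refl)
      (simp only: block_count_eq_brank_alternating_sum[OF rank_count, symmetric] of_nat_eq_iff)
  then show ?thesis using ex1_nw_se_perm_mat[OF \<sigma>, where 'a='a] by (simp only:)
qed

end
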